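(* Let $\mathcal S$ be a $\frac{31}{32}$-sparse family of dyadic cubes in $(\mathbb R_+,|\cdot|,\mu)$ and let $\phi$ be a Young function with $$K_\phi:=\sum_{k=1}^\infty\frac{k}{\overline\phi^{-1}(32^{2^k})}<\infty.$$ Then for every non-negative locally integrable $w$ and all $t>0$, $$w(\{x\in\mathbb R_+:|\mathcal A_{\mathcal S,L\log L}f(x)|>t\})\le C\,K_\phi\int_{\mathbb R_+}\Phi\Big(\frac{|f(x)|}t\Big)M_\phi\Big(\frac w\mu\Big)(x)\,d\mu(x),$$ where $\Phi(x)=x\log(e+x)$ and $C$ is an absolute constant (depending at most on $\lambda$).
   Context: On $\mathbb R_+=(0,\infty)$, $d\mu(x)=x^{2\lambda}dx$ ($\lambda>0$); $w(E)=\int_Ew\,dx$; $\frac w\mu$ denotes $x\mapsto w(x)x^{-2\lambda}$. A Young function is a convex increasing $\phi:[0,\infty)\to[0,\infty)$ with $\phi(0)=0$, $\phi(t)\to\infty$; $\overline\phi(s)=\sup_{t>0}(st-\phi(t))$ is its complementary function. Luxemburg average: $\|g\|_{\psi,Q}=\inf\{\gamma>0:\frac1{\mu(Q)}\int_Q\psi(|g|/\gamma)d\mu\le1\}$; $\|g\|_{L\log L,Q}$ denotes this with $\psi(x)=x\log(e+x)$; $M_\phi g(x)=\sup_{B\ni x}\|g\|_{\phi,B}$ over intervals $B$. $\mathcal D$ is a fixed system of dyadic cubes on the space of homogeneous type $(\mathbb R_+,|\cdot|,\mu)$. $\mathcal S\subset\mathcal D$ is $\eta$-sparse if for every $Q\in\mathcal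 S$ there is measurable $E_Q\subset Q$ with $\mu(E_Q)\ge\eta\mu(Q)$ and the $E_Q$ have finite overlap. $\mathcal A_{\mathcal S,L\log L}f(x):=\sum_{Q\in\mathcal S}\|f\|_{L\log L,Q}\chi_Q(x)$. *)

theory Defs
  imports "HOL-Analysis.Analysis"
begin

definition mu :: "real \<Rightarrow> real measure" where
  "mu lam = density lborel (\<lambda>x. ennreal (indicator {0<..} x * x powr (2 * lam)))"

definition dyadic :: "real set set" where
  "dyadic = {{real k * 2 powr (real_of_int j) <.. (real k + 1) * 2 powr (real_of_int j)} | k j. True}"

definition sparse :: "real \<Rightarrow> real \<Rightarrow> real set set \<Rightarrow> bool" where
  "sparse lam eta S \<longleftrightarrow> S \<subseteq> dyadic \<and>
     (\<exists>E. (\<forall>Q\<in>S. E Q \<in> sets borel \<and> E Q \<subseteq> Q \<and>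
               ennreal eta * emeasure (mu lam) Q \<le> emeasure (mu lam) (E Q))
          \<and> disjoint_family_on E S)"

definition young :: "(real \<Rightarrow> real) \<Rightarrow> bool" where
  "young \<phi> \<longleftrightarrow> convex_on {0..} \<phi> \<and> mono_on {0..} \<phi> \<and> (\<forall>t\<ge>0. 0 \<le> \<phi> t) \<and>
      \<phi> 0 = 0 \<and> filterlim \<phi> at_top at_top"

definition young_conj :: "(real \<Rightarrow> real) \<Rightarrow> real \<Rightarrow> ereal" where
  "young_conj \<phi> s = (SUP t\<in>{0<..}. ereal (s * t - \<phi> t))"

definition conj_inv :: "(real \<Rightarrow> real) \<Rightarrow> real \<Rightarrow> real" where
  "conj_inv \<phi> s = Sup {r. 0 \<le> r \<and> young_conj \<phi> r \<le> ereal s}"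

definition K_term :: "(real \<Rightarrow> real) \<Rightarrow> nat \<Rightarrow> real" where
  "K_term \<phi> k = real k / conj_inv \<phi> (32 ^ (2 ^ k))"

text \<open>K_phi = sum over k \<ge> 1 (index shifted by one).\<close>
definition K_phi :: "(real \<Rightarrow> real) \<Rightarrow> real" where
  "K_phi \<phi> = (\<Sum>k. K_term \<phi> (Suc k))"

definition Phi :: "real \<Rightarrow> real" where
  "Phi x = x * ln (exp 1 + x)"

text \<open>Luxemburg average with respect to mu (value infinity if the defining set is empty).\<close>
definition lux :: "real \<Rightarrow> (real \<Rightarrow> real) \<Rightarrow> (real \<Rightarrow> real) \<Rightarrow> real set \<Rightarrow> ennreal" where
  "lux lam \<psi> g Q = Inf {ennreal \<gamma> | \<gamma>. \<gamma> > 0 \<and>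
      (1 / emeasure (mu lam) Q) * (\<integral>\<^sup>+ x\<in>Q. ennreal (\<psi> (\<bar>g x\<bar> / \<gamma>)) \<partial>mu lam) \<le> 1}"

definition M_young :: "real \<Rightarrow> (real \<Rightarrow> real) \<Rightarrow> (real \<Rightarrow> real) \<Rightarrow> real \<Rightarrow> ennreal" where
  "M_young lam \<phi> g x = (SUP B\<in>{B. \<exists>a b. 0 \<le> a \<and> a < b \<and> B = {a<..<b} \<and> x \<in> B}. lux lam \<phi> g B)"

definition A_LlogL :: "real \<Rightarrow> real set set \<Rightarrow> (real \<Rightarrow> real) \<Rightarrow> real \<Rightarrow> ennreal" where
  "A_LlogL lam S f x = (SUP F\<in>{F. finite F \<and> F \<subseteq> S}. \<Sum>Q\<in>F. lux lam Phi f Q * indicator Q x)"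

definition wmeas :: "(real \<Rightarrow> real) \<Rightarrow> real set \<Rightarrow> ennreal" where
  "wmeas w E = (\<integral>\<^sup>+ x\<in>E. ennreal (w x) \<partial>lborel)"

definition loc_int :: "(real \<Rightarrow> real) \<Rightarrow> bool" where
  "loc_int w \<longleftrightarrow> w \<in> borel_measurable borel \<and>
     (\<forall>a b. 0 < a \<longrightarrow> a \<le> b \<longrightarrow> set_integrable lborel {a..b} w)"

end

theory Submission
  imports Defs
begin

(* Sort the cubes Q of S into layers S_k, t 2^(-k-1) < ||f||_{L log L,Q} <= t 2^(-k), and set
   aside the cubes whose average exceeds t.  If A f(x) > t at a point x outside those cubes, then
   for some k the point x lies in more than allowance(k) cubes of S_k, because the tolerated cubes
   contribute at most 3t/32.  By sparseness, the points of a cube P lying in more than L smaller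
   cubes of the family form a set of measure at most 31^(-L) mu(P); Holder's inequality for phi
   and its complementary function turns this into the gain 1 / phi*^(-1)(31^L) on the weight w/mu,
   and the Carleson embedding for sparse families sums the resulting terms mu(P) ||w/mu||_{phi,P}
   against Phi(|f|/t) M_phi(w/mu).  With allowance(k) of order 2^(k/2) the loss 2^k k of rescaling
   the L log L average is absorbed by phi*^(-1)(32^(2^(k/2))), which is what K_phi controls. *)

lemma ennreal_mult_mult:
  "0 \<le> a \<Longrightarrow> 0 \<le> b \<Longrightarrow> ennreal a * (ennreal b * X) = ennreal (a * b) * X"
  by (simp add: ennreal_mult mult.assoc)

lemma average_le_1_iff:
  fixes m I :: ennreal
  assumes "0 < m" "m < \<infinity>"
  shows "1 / m * I \<le> 1 \<longleftrightarrow> I \<le> m"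
proof
  assume "1 / m * I \<le> 1"
  then have "1 / m * I * m \<le> 1 * m"
    by (rule mult_right_mono) simp
  moreover have "1 / m * I * m = 1 * ((I * m) / m)"
    unfolding mult.assoc by (rule ennreal_divide_times)
  moreover have "\<dots> = I"
    using assms mult_divide_eq_ennreal[of m I] by simp
  ultimately show "I \<le> m"
    by simp
next
  assume "I \<le> m"
  then have "I / m \<le> m / m"
    by (rule divide_right_mono_ennreal)
  moreover have "1 / m * I = I / m"
    by (metis ennreal_times_divide mult.commute mult.right_neutral)
  ultimately show "1 / m * I \<le> 1"
    using assms by simp
qed

lemma ennreal_le_divide_mult:
  fixes I X :: ennreal
  assumes "0 < c" "0 \<le> B" "I * ennreal c \<le> ennreal B * X"
  shows "I \<le> ennreal (B / c) * X"
proof -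
  have "I = I * ennreal c / ennreal c"
    using assms(1) by (simp add: mult_divide_eq_ennreal)
  also have "\<dots> \<le> ennreal B * X / ennreal c"
    using assms(3) by (rule divide_right_mono_ennreal)
  also have "\<dots> = ennreal (B / c) * X"
    using assms(1,2) by (simp add: ennreal_times_divide mult.commute divide_ennreal[symmetric] ennreal_divide_times)
  finally show ?thesis .
qed

lemma sum_mult_remove_min:
  fixes m b :: "'a \<Rightarrow> ennreal"
  assumes "finite G" "P0 \<in> G" "\<And>P. P \<in> G \<Longrightarrow> b P0 \<le> b P"
  shows "(\<Sum>P\<in>G. m P * b P) = (\<Sum>P\<in>G - {P0}. m P * (b P - b P0)) + b P0 * (\<Sum>P\<in>G. m P)"
proof -
  have "(\<Sum>P\<in>G. m P * b P) = (\<Sum>P\<in>G. m P * (if P = P0 then 0 else b P - b P0) + m P * b P0)"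
    using assms(3) by (intro sum.cong) (auto simp: diff_add_cancel_ennreal simp flip: distrib_left)
  also have "\<dots> = (\<Sum>P\<in>G. m P * (if P = P0 then 0 else b P - b P0)) + (\<Sum>P\<in>G. m P) * b P0"
    by (simp only: sum.distrib sum_distrib_right)
  also have "(\<Sum>P\<in>G. m P * (if P = P0 then 0 else b P - b P0)) = (\<Sum>P\<in>G - {P0}. m P * (b P - b P0))"
    using assms(1,2) by (simp add: sum.remove)
  finally show ?thesis
    by (simp add: mult.commute)
qed

lemma nn_integral_indicator_Union_incseq:
  assumes "incseq A" "\<And>n. A n \<in> sets M" "g \<in> borel_measurable M"
  shows "(\<integral>\<^sup>+x. g x * indicator (\<Union>n. A n) x \<partial>M) = (SUP n. \<integral>\<^sup>+x. g x * indicator (A n) x \<partial>M)"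
proof -
  have emeasure_density_g: "emeasure (density M g) B = (\<integral>\<^sup>+x. g x * indicator B x \<partial>M)" if "B \<in> sets M" for B
    using that assms(3) by (subst emeasure_density) auto
  have "(\<Union>n. A n) \<in> sets M"
    using assms(2) by auto
  then have "(\<integral>\<^sup>+x. g x * indicator (\<Union>n. A n) x \<partial>M) = emeasure (density M g) (\<Union>n. A n)"
    by (simp add: emeasure_density_g)
  also have "\<dots> = (SUP n. emeasure (density M g) (A n))"
    using assms(1,2) by (intro SUP_emeasure_incseq[symmetric]) auto
  also have "\<dots> = (SUP n. \<integral>\<^sup>+x. g x * indicator (A n) x \<partial>M)"
    using assms(2) by (simp add: emeasure_density_g)
  finally show ?thesis .
qed

lemma sets_mu [simp, measurable_cong]: "sets (mu lam) = sets borel"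
  by (simp add: mu_def)

lemma nn_integral_mu:
  "g \<in> borel_measurable borel \<Longrightarrow>
    (\<integral>\<^sup>+x. g x \<partial>mu lam) = (\<integral>\<^sup>+x. ennreal (indicator {0<..} x * x powr (2 * lam)) * g x \<partial>lborel)"
  unfolding mu_def by (subst nn_integral_density) auto

lemma emeasure_mu:
  "A \<in> sets borel \<Longrightarrow>
    emeasure (mu lam) A = (\<integral>\<^sup>+x. ennreal (indicator {0<..} x * x powr (2 * lam)) * indicator A x \<partial>lborel)"
  unfolding mu_def by (subst emeasure_density) auto

lemma emeasure_mu_Ioc_finite:
  assumes "0 \<le> a" "lam > 0"
  shows "emeasure (mu lam) {a<..b} < \<infinity>"
proof -
  have "emeasure (mu lam) {a<..b}
      \<le> (\<integral>\<^sup>+x. ennreal (b powr (2 * lam)) * indicator {a<..b} x \<partial>lborel)"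
    using assms unfolding emeasure_mu[of "{a<..b}", simplified]
    by (intro nn_integral_mono) (auto simp: indicator_def intro!: ennreal_leI powr_mono2)
  also have "\<dots> < \<infinity>"
    by (cases "a \<le> b") (simp_all add: nn_integral_cmult_indicator ennreal_mult_less_top)
  finally show ?thesis .
qed

lemma emeasure_mu_Ioc_pos:
  assumes "0 \<le> a" "a < b" "lam > 0"
  shows "0 < emeasure (mu lam) {a<..b}"
proof -
  define c where "c = (a + b) / 2"
  have c: "0 < c" "a < c" "c < b"
    using assms(1,2) by (auto simp: c_def)
  then have "0 < (\<integral>\<^sup>+x. ennreal (c powr (2 * lam)) * indicator {c<..b} x \<partial>lborel)"
    by (simp add: nn_integral_cmult_indicator ennreal_zero_less_mult_iff)
  also have "\<dots> \<le> emeasure (mu lam) {a<..b}"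
    using c assms(3) unfolding emeasure_mu[of "{a<..b}", simplified]
    by (intro nn_integral_mono) (auto simp: indicator_def intro!: ennreal_leI powr_mono2)
  finally show ?thesis .
qed

lemma AE_mu_not_in_finite: "finite A \<Longrightarrow> AE x in mu lam. x \<notin> A"
  unfolding mu_def
  by (subst AE_density) (auto intro: eventually_mono[OF AE_not_in[OF finite_imp_null_set_lborel]])

lemma wmeas_eq_nn_integral_mu:
  assumes "w \<in> borel_measurable borel" "A \<in> sets borel" "A \<subseteq> {0<..}"
    and "\<And>x. x > 0 \<Longrightarrow> 0 \<le> w x"
  shows "wmeas w A = (\<integral>\<^sup>+x. ennreal (w x * x powr (-2 * lam)) * indicator A x \<partial>mu lam)"
proof -
  have "ennreal (indicator {0<..} x * x powr (2 * lam)) * (ennreal (w x * x powr (-2 * lam)) * indicator A x)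
      = ennreal (w x) * indicator A x" for x
  proof (cases "x \<in> A")
    case True
    then have "x > 0"
      using assms(3) by auto
    then have "x powr (2 * lam) * (w x * x powr (-2 * lam)) = w x"
      by (simp add: powr_minus field_simps)
    then show ?thesis
      using True \<open>x > 0\<close> assms(4)[of x] by (simp add: ennreal_mult[symmetric])
  qed simp
  then show ?thesis
    using assms by (simp add: nn_integral_mu wmeas_def mult.commute)
qed

section \<open>Dyadic intervals\<close>

lemma dyadicE:
  assumes "Q \<in> dyadic"
  obtains a b where "0 \<le> a" "a < b" "Q = {a<..b}"
proof -
  obtain k :: nat and j :: int where "Q = {real k * 2 powr j <.. (real k + 1) * 2 powr j}"
    using assms unfolding dyadic_def by blast
  moreover have "real k * 2 powr j < (real k + 1) * 2 powr j"
    by (simp add: distrib_right)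
  ultimately show thesis
    by (intro that[of "real k * 2 powr j" "(real k + 1) * 2 powr j"]) auto
qed

lemma dyadic_sets: "Q \<in> dyadic \<Longrightarrow> Q \<in> sets borel"
  by (elim dyadicE) auto

lemma dyadic_pos: "Q \<in> dyadic \<Longrightarrow> x \<in> Q \<Longrightarrow> 0 < x"
  by (elim dyadicE) auto

lemma emeasure_mu_dyadic:
  assumes "lam > 0" "Q \<in> dyadic"
  shows "0 < emeasure (mu lam) Q" "emeasure (mu lam) Q < \<infinity>"
  using assms by (metis dyadicE emeasure_mu_Ioc_finite emeasure_mu_Ioc_pos)+

lemma dyadic_subset_of_le:
  fixes k k' :: nat and j j' :: int
  assumes "j \<le> j'"
    and "real k * 2 powr j < x" "x \<le> (real k + 1) * 2 powr j"
    and "real k' * 2 powr j' < x" "x \<le> (real k' + 1) * 2 powr j'"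
  shows "{real k * 2 powr j <.. (real k + 1) * 2 powr j} \<subseteq> {real k' * 2 powr j' <.. (real k' + 1) * 2 powr j'}"
proof -
  define N :: nat where "N = 2 ^ nat (j' - j)"
  define u where "u = 2 powr j"
  have "u > 0"
    by (simp add: u_def)
  have "2 powr j' = 2 powr (real_of_int (j' - j)) * u"
    by (simp add: u_def powr_add[symmetric])
  also have "2 powr (real_of_int (j' - j)) = real N"
    using assms(1) by (simp add: N_def powr_realpow[symmetric])
  finally have j': "2 powr j' = real N * u" .
  have "real k * u < (real k' + 1) * real N * u" "real k' * real N * u < (real k + 1) * u"
    using assms(2-5) by (simp_all add: j' u_def[symmetric] mult.assoc)
  then have "real k < (real k' + 1) * real N" "real k' * real N < real k + 1"
    using \<open>u > 0\<close> by simp_all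
  then have "k < (k' + 1) * N" "k' * N < k + 1"
    by (metis of_nat_1 of_nat_add of_nat_less_iff of_nat_mult)+
  then have "k + 1 \<le> (k' + 1) * N" "k' * N \<le> k"
    by linarith+
  then have "real (k + 1) \<le> real ((k' + 1) * N)" "real (k' * N) \<le> real k"
    by (simp_all only: of_nat_le_iff)
  then have "real k + 1 \<le> (real k' + 1) * real N" "real k' * real N \<le> real k"
    by (simp_all add: distrib_right)
  then have "real k' * real N * u \<le> real k * u" "(real k + 1) * u \<le> (real k' + 1) * real N * u"
    using \<open>u > 0\<close> by simp_all
  then show ?thesis
    by (auto simp: j' u_def[symmetric] mult.assoc)
qed

lemma dyadic_nested:
  assumes "Q \<in> dyadic" "Q' \<in> dyadic" "Q \<inter> Q' \<noteq> {}"
  shows "Q \<subseteq> Q' \<or> Q' \<subseteq> Q"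
proof -
  obtain k k' :: nat and j j' :: int
    where Q: "Q = {real k * 2 powr j <.. (real k + 1) * 2 powr j}"
      and Q': "Q' = {real k' * 2 powr j' <.. (real k' + 1) * 2 powr j'}"
    using assms(1,2) unfolding dyadic_def by blast
  obtain x where "x \<in> Q" "x \<in> Q'"
    using assms(3) by blast
  then show ?thesis
    using dyadic_subset_of_le[of j j' k x k'] dyadic_subset_of_le[of j' j k' x k]
    unfolding Q Q' by (cases "j \<le> j'") auto
qed

lemma dyadic_Union_maximal:
  assumes "finite G" "G \<subseteq> dyadic"
  defines "G' \<equiv> {Q\<in>G. \<forall>R\<in>G. Q \<subseteq> R \<longrightarrow> R = Q}"
  shows "\<Union>G' = \<Union>G" and "disjoint_family_on id G'"
proof -
  have "\<exists>R\<in>G'. Q \<subseteq> R" if "Q \<in> G" for Q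
    using finite_has_maximal2[OF assms(1) that] by (auto simp: G'_def)
  moreover have "G' \<subseteq> G"
    by (auto simp: G'_def)
  ultimately show "\<Union>G' = \<Union>G"
    by blast
  show "disjoint_family_on id G'"
    unfolding disjoint_family_on_def
  proof (intro ballI impI)
    fix Q R assume "Q \<in> G'" "R \<in> G'" "Q \<noteq> R"
    then show "id Q \<inter> id R = {}"
      using dyadic_nested[of Q R] assms(2) unfolding G'_def by auto
  qed
qed

lemma emeasure_Union_dyadic_mono:
  assumes "finite G" "G \<subseteq> dyadic" "sets M = sets borel" "sets N = sets borel"
    and "\<And>Q. Q \<in> G \<Longrightarrow> emeasure M Q \<le> emeasure N Q"
  shows "emeasure M (\<Union>G) \<le> emeasure N (\<Union>G)"
proof -
  define G' where "G' = {Q\<in>G. \<forall>R\<in>G. Q \<subseteq> R \<longrightarrow> R = Q}"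
  have G': "finite G'" "G' \<subseteq> G" "\<Union>G' = \<Union>G" "disjoint_family_on id G'"
    using dyadic_Union_maximal[OF assms(1,2)] assms(1) by (auto simp: G'_def)
  have "emeasure K (\<Union>G) = (\<Sum>Q\<in>G'. emeasure K Q)" if "sets K = sets borel" for K
  proof -
    have "id ` G' \<subseteq> sets K"
      using G'(2) assms(2) dyadic_sets that by auto
    then show ?thesis
      using sum_emeasure[of id G' K] G' by simp
  qed
  moreover have "(\<Sum>Q\<in>G'. emeasure M Q) \<le> (\<Sum>Q\<in>G'. emeasure N Q)"
    using assms(5) G'(2) by (intro sum_mono) auto
  ultimately show ?thesis
    using assms(3,4) by simp
qed

definition depth :: "real set set \<Rightarrow> real \<Rightarrow> nat" where
  "depth G x = card {Q\<in>G. x \<in> Q}"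

lemma of_nat_card_eq_sum_indicator:
  "finite G \<Longrightarrow> of_nat (card {P\<in>G. x \<in> D P}) = (\<Sum>P\<in>G. indicator (D P) x :: 'a::semiring_1)"
  by (simp add: indicator_def sum.inter_filter[symmetric] Int_def)

lemma measurable_depth [measurable]:
  assumes "finite G" "G \<subseteq> sets borel"
  shows "depth G \<in> borel \<rightarrow>\<^sub>M count_space UNIV"
proof -
  have "(\<lambda>x. real (depth G x)) \<in> borel_measurable borel"
    unfolding depth_def of_nat_card_eq_sum_indicator[OF assms(1)]
    using assms by (intro borel_measurable_sum) auto
  then have "{x. real (depth G x) = real n} \<in> sets borel" for n
    by measurable
  then show ?thesis
    by (subst measurable_count_space_eq2_countable) (auto simp: vimage_def)
qed

lemma sets_depth_greater: "finite G \<Longrightarrow> G \<subseteq> sets borel \<Longrightarrow> {x. j < depth G x} \<in> sets borel"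
  by measurable

lemma indicator_Union_le_depth: "finite G \<Longrightarrow> indicator (\<Union>G) x \<le> (of_nat (depth G x) :: ennreal)"
  by (auto simp: indicator_def depth_def Suc_le_eq card_gt_0_iff)

text \<open>The intervals containing \<open>x\<close> form a chain, on which \<open>P \<mapsto> depth {Q\<in>G. Q \<subseteq> P} x\<close>
  is injective with values \<open>\<ge> 1\<close>.\<close>

lemma depth_diff_le_card_deep:
  assumes "finite G" "G \<subseteq> dyadic"
  shows "depth G x - L \<le> card {P\<in>G. x \<in> P \<and> L < depth {Q\<in>G. Q \<subseteq> P} x}"
proof -
  define C where "C = {Q\<in>G. x \<in> Q}"
  define d where "d P = card {Q\<in>C. Q \<subseteq> P}" for P
  have "finite C"
    using assms(1) by (simp add: C_def)
  have d_depth: "depth {Q\<in>G. Q \<subseteq> P} x = d P" for P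
    unfolding depth_def d_def C_def by (rule arg_cong[where f = card]) auto
  have "d P < d P'" if "P \<in> C" "P' \<in> C" "P \<subset> P'" for P P'
    unfolding d_def using \<open>finite C\<close> that by (intro psubset_card_mono) auto
  moreover have "P \<subseteq> P' \<or> P' \<subseteq> P" if "P \<in> C" "P' \<in> C" for P P'
    using that assms(2) dyadic_nested[of P P'] by (auto simp: C_def)
  ultimately have "inj_on d C"
    by (metis inj_onI less_irrefl psubset_eq)
  moreover have "d P \<in> {1..L}" if "P \<in> C" "d P \<le> L" for P
    using that \<open>finite C\<close> by (auto simp: d_def Suc_le_eq card_gt_0_iff)
  ultimately have "card {P\<in>C. d P \<le> L} \<le> card {1..L}"
    by (intro card_inj_on_le) (auto intro: inj_on_subset)
  then have "card {P\<in>C. d P \<le> L} \<le> L"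
    by simp
  moreover have "card C = card {P\<in>C. d P \<le> L} + card {P\<in>C. L < d P}"
    using \<open>finite C\<close> by (subst card_Un_disjoint[symmetric]) (auto intro: arg_cong[where f = card])
  ultimately have "depth G x - L \<le> card {P\<in>C. L < d P}"
    unfolding depth_def C_def[symmetric] by linarith
  also have "{P\<in>C. L < d P} = {P\<in>G. x \<in> P \<and> L < depth {Q\<in>G. Q \<subseteq> P} x}"
    by (auto simp: C_def d_depth)
  finally show ?thesis .
qed

lemma deep_point_in_smaller:
  assumes "finite G" "G \<subseteq> dyadic" "P \<in> G" "x \<in> P" "Suc j < depth {Q\<in>G. Q \<subseteq> P} x"
  shows "\<exists>R\<in>G. R \<subset> P \<and> x \<in> R \<and> j < depth {Q\<in>G. Q \<subseteq> R} x"
proof -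
  define B where "B = {R\<in>G. R \<subset> P \<and> x \<in> R}"
  have "finite B"
    using assms(1) by (simp add: B_def)
  have A: "{Q\<in>{Q\<in>G. Q \<subseteq> P}. x \<in> Q} \<subseteq> insert P B"
    by (auto simp: B_def)
  have "B \<noteq> {}"
  proof
    assume "B = {}"
    then have "depth {Q\<in>G. Q \<subseteq> P} x \<le> card {P}"
      using A unfolding depth_def by (intro card_mono) auto
    with assms(5) show False
      by simp
  qed
  then obtain R where "R \<in> B" and R_max: "\<forall>R'\<in>B. R \<le> R' \<longrightarrow> R = R'"
    using finite_has_maximal[OF \<open>finite B\<close>] by blast
  then have R: "R \<in> G" "R \<subset> P" "x \<in> R"
    by (auto simp: B_def)
  have "Q \<subseteq> R" if "Q \<in> B" for Q
  proof -
    have "Q \<subseteq> R \<or> R \<subseteq> Q"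
      using dyadic_nested[of Q R] that R assms(2) by (auto simp: B_def)
    then show ?thesis
      using R_max that by auto
  qed
  with A have "{Q\<in>{Q\<in>G. Q \<subseteq> P}. x \<in> Q} \<subseteq> insert P {Q\<in>{Q\<in>G. Q \<subseteq> R}. x \<in> Q}"
    by (auto simp: B_def)
  then have "depth {Q\<in>G. Q \<subseteq> P} x \<le> card (insert P {Q\<in>{Q\<in>G. Q \<subseteq> R}. x \<in> Q})"
    unfolding depth_def by (rule card_mono[rotated]) (use assms(1) in simp)
  also have "\<dots> \<le> Suc (depth {Q\<in>G. Q \<subseteq> R} x)"
    unfolding depth_def using assms(1) by (simp add: card_insert_if)
  finally have "j < depth {Q\<in>G. Q \<subseteq> R} x"
    using assms(5) by simp
  with R show ?thesis
    by blast
qed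

section \<open>Sparse families and the Carleson embedding\<close>

definition sparse_by :: "real measure \<Rightarrow> real \<Rightarrow> real set set \<Rightarrow> (real set \<Rightarrow> real set) \<Rightarrow> bool" where
  "sparse_by M eta S E \<longleftrightarrow> S \<subseteq> dyadic \<and>
     (\<forall>Q\<in>S. E Q \<in> sets borel \<and> E Q \<subseteq> Q \<and> ennreal eta * emeasure M Q \<le> emeasure M (E Q)) \<and>
     disjoint_family_on E S"

lemma sparse_iff_sparse_by: "sparse lam eta S \<longleftrightarrow> (\<exists>E. sparse_by (mu lam) eta S E)"
  unfolding sparse_def sparse_by_def by blast

lemma sparse_by_subset: "sparse_by M eta S E \<Longrightarrow> S' \<subseteq> S \<Longrightarrow> sparse_by M eta S' E"
  unfolding sparse_by_def by (auto intro: disjoint_family_on_mono)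

locale dyadic_measure =
  fixes M :: "real measure"
  assumes sets_M: "sets M = sets borel"
    and emeasure_dyadic_finite: "Q \<in> dyadic \<Longrightarrow> emeasure M Q < \<infinity>"
begin

declare sets_M [measurable_cong]

context
  fixes eta :: real and G :: "real set set" and E :: "real set \<Rightarrow> real set"
  assumes sparse: "sparse_by M eta G E" and finite_G: "finite G" and eta: "0 < eta" "eta \<le> 1"
begin

lemma dyadic_G: "G \<subseteq> dyadic"
  using sparse by (simp add: sparse_by_def)

lemma sets_E: "Q \<in> G \<Longrightarrow> E Q \<in> sets M" and E_subset: "Q \<in> G \<Longrightarrow> E Q \<subseteq> Q"
  using sparse by (auto simp: sparse_by_def sets_M)

lemma sum_emeasure_le_Union_E:
  assumes "H \<subseteq> G"
  shows "(\<Sum>R\<in>H. emeasure M R) \<le> ennreal (1 / eta) * emeasure M (\<Union>R\<in>H. E R)"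
proof -
  have "emeasure M R \<le> ennreal (1 / eta) * emeasure M (E R)" if "R \<in> G" for R
  proof -
    have "emeasure M R = ennreal (1 / eta) * (ennreal eta * emeasure M R)"
      using eta by (simp add: ennreal_mult_mult)
    also have "\<dots> \<le> ennreal (1 / eta) * emeasure M (E R)"
      using sparse that by (intro mult_left_mono) (auto simp: sparse_by_def)
    finally show ?thesis .
  qed
  then have "(\<Sum>R\<in>H. emeasure M R) \<le> ennreal (1 / eta) * (\<Sum>R\<in>H. emeasure M (E R))"
    using assms by (auto simp: sum_distrib_left intro: sum_mono)
  also have "(\<Sum>R\<in>H. emeasure M (E R)) = emeasure M (\<Union>R\<in>H. E R)"
    using assms sparse finite_G sets_E
    by (intro sum_emeasure) (auto simp: sparse_by_def intro: disjoint_family_on_mono finite_subset)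
  finally show ?thesis .
qed

lemma carleson_packing: "(\<Sum>P\<in>G. emeasure M P) \<le> ennreal (1 / eta) * emeasure M (\<Union>G)"
proof -
  have "\<Union>G \<in> sets M"
    using finite_G dyadic_G dyadic_sets by (auto simp: sets_M)
  have "(\<Sum>P\<in>G. emeasure M P) \<le> ennreal (1 / eta) * emeasure M (\<Union>R\<in>G. E R)"
    by (rule sum_emeasure_le_Union_E) simp
  also have "\<dots> \<le> ennreal (1 / eta) * emeasure M (\<Union>G)"
    using \<open>\<Union>G \<in> sets M\<close> E_subset by (intro mult_left_mono emeasure_mono) auto
  finally show ?thesis .
qed

text \<open>The sets \<open>E R\<close> with \<open>R \<subset> P\<close> lie in \<open>P - E P\<close>, of measure at most \<open>(1 - \<eta>) M P\<close>.\<close>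

lemma carleson_packing_below:
  assumes "P \<in> G"
  shows "(\<Sum>R\<in>{R\<in>G. R \<subset> P}. emeasure M R) \<le> ennreal ((1 - eta) / eta) * emeasure M P"
proof -
  define U where "U = (\<Union>R\<in>{R\<in>G. R \<subset> P}. E R)"
  have "U \<in> sets M"
    unfolding U_def using finite_G sets_E by (intro sets.finite_UN) auto
  have "P \<in> sets M" "emeasure M P < \<infinity>"
    using assms dyadic_G dyadic_sets emeasure_dyadic_finite by (auto simp: sets_M)
  have "E R \<inter> E P = {}" if "R \<in> G" "R \<subset> P" for R
  proof -
    have "R \<noteq> P"
      using that(2) by blast
    then show ?thesis
      using sparse that(1) assms unfolding sparse_by_def disjoint_family_on_def by blast
  qed
  then have "U \<inter> E P = {}"
    unfolding U_def by blast
  have "ennreal eta * emeasure M P + emeasure M U \<le> emeasure M (E P) + emeasure M U"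
    using sparse assms by (intro add_right_mono) (auto simp: sparse_by_def)
  also have "\<dots> = emeasure M (U \<union> E P)"
    using \<open>U \<inter> E P = {}\<close> \<open>U \<in> sets M\<close> sets_E assms by (subst plus_emeasure) (auto simp: Un_commute)
  also have "\<dots> \<le> emeasure M P"
    using \<open>P \<in> sets M\<close> E_subset assms by (intro emeasure_mono) (auto simp: U_def)
  also have "\<dots> = ennreal eta * emeasure M P + ennreal (1 - eta) * emeasure M P"
    using eta by (simp add: distrib_right[symmetric] ennreal_plus[symmetric] del: ennreal_plus)
  finally have "emeasure M U \<le> ennreal (1 - eta) * emeasure M P"
    using \<open>emeasure M P < \<infinity>\<close> by (auto simp: ennreal_add_left_cancel_le ennreal_mult_eq_top_iff)
  have "(\<Sum>R\<in>{R\<in>G. R \<subset> P}. emeasure M R) \<le> ennreal (1 / eta) * emeasure M U"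
    unfolding U_def by (rule sum_emeasure_le_Union_E) auto
  also have "\<dots> \<le> ennreal (1 / eta) * (ennreal (1 - eta) * emeasure M P)"
    using \<open>emeasure M U \<le> _\<close> by (rule mult_left_mono) simp
  also have "\<dots> = ennreal ((1 - eta) / eta) * emeasure M P"
    using eta by (simp add: ennreal_mult_mult)
  finally show ?thesis .
qed

lemma sets_deep_points:
  assumes "P \<in> G"
  shows "{x\<in>P. j < depth {Q\<in>G. Q \<subseteq> P} x} \<in> sets M"
proof -
  have "P \<in> sets borel"
    using assms dyadic_G dyadic_sets by auto
  moreover have "{x. j < depth {Q\<in>G. Q \<subseteq> P} x} \<in> sets borel"
    using finite_G dyadic_G dyadic_sets by (intro sets_depth_greater) auto
  ultimately have "P \<inter> {x. j < depth {Q\<in>G. Q \<subseteq> P} x} \<in> sets borel"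
    by (rule sets.Int)
  moreover have "{x\<in>P. j < depth {Q\<in>G. Q \<subseteq> P} x} = P \<inter> {x. j < depth {Q\<in>G. Q \<subseteq> P} x}"
    by blast
  ultimately show ?thesis
    by (simp only: sets_M)
qed

lemma emeasure_deep_points:
  assumes "P \<in> G"
  shows "emeasure M {x\<in>P. j < depth {Q\<in>G. Q \<subseteq> P} x} \<le> ennreal (((1 - eta) / eta) ^ j) * emeasure M P"
  using assms
proof (induction j arbitrary: P)
  case 0
  then show ?case
    using dyadic_G dyadic_sets by (auto simp: sets_M intro!: emeasure_mono)
next
  case (Suc j)
  define Rs where "Rs = {R\<in>G. R \<subset> P}"
  have "finite Rs"
    using finite_G by (simp add: Rs_def)
  have sets: "{x\<in>R. j < depth {Q\<in>G. Q \<subseteq> R} x} \<in> sets M" if "R \<in> Rs" for R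
    using that sets_deep_points by (simp add: Rs_def)
  have "{x\<in>P. Suc j < depth {Q\<in>G. Q \<subseteq> P} x} \<subseteq> (\<Union>R\<in>Rs. {x\<in>R. j < depth {Q\<in>G. Q \<subseteq> R} x})"
    using deep_point_in_smaller[OF finite_G dyadic_G Suc.prems] unfolding Rs_def by blast
  then have "emeasure M {x\<in>P. Suc j < depth {Q\<in>G. Q \<subseteq> P} x}
      \<le> emeasure M (\<Union>R\<in>Rs. {x\<in>R. j < depth {Q\<in>G. Q \<subseteq> R} x})"
    using sets \<open>finite Rs\<close> by (intro emeasure_mono) auto
  also have "\<dots> \<le> (\<Sum>R\<in>Rs. emeasure M {x\<in>R. j < depth {Q\<in>G. Q \<subseteq> R} x})"
    using sets \<open>finite Rs\<close> by (intro emeasure_subadditive_finite) auto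
  also have "\<dots> \<le> (\<Sum>R\<in>Rs. ennreal (((1 - eta) / eta) ^ j) * emeasure M R)"
    using Suc.IH by (intro sum_mono) (auto simp: Rs_def)
  also have "\<dots> = ennreal (((1 - eta) / eta) ^ j) * (\<Sum>R\<in>Rs. emeasure M R)"
    by (simp add: sum_distrib_left)
  also have "\<dots> \<le> ennreal (((1 - eta) / eta) ^ j) * (ennreal ((1 - eta) / eta) * emeasure M P)"
    using carleson_packing_below[OF Suc.prems] by (intro mult_left_mono) (auto simp: Rs_def)
  also have "\<dots> = ennreal (((1 - eta) / eta) ^ Suc j) * emeasure M P"
    using eta by (simp only: ennreal_mult_mult zero_le_power power_Suc2 divide_nonneg_pos diff_ge_0_iff_ge)
  finally show ?case .
qed

lemma carleson_packing_integral:
  assumes "h \<in> borel_measurable borel" "0 \<le> c"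
    and "\<And>P. P \<in> G \<Longrightarrow> emeasure M P \<le> ennreal c * (\<integral>\<^sup>+x\<in>P. h x \<partial>M)"
  shows "(\<Sum>P\<in>G. emeasure M P) \<le> ennreal (c / eta) * (\<integral>\<^sup>+x\<in>\<Union>G. h x \<partial>M)"
proof -
  define N where "N = density M (\<lambda>x. ennreal c * h x)"
  have emeasure_N: "emeasure N A = ennreal c * (\<integral>\<^sup>+x\<in>A. h x \<partial>M)" if "A \<in> sets borel" for A
    using assms(1) that unfolding N_def
    by (subst emeasure_density) (auto simp: sets_M mult.assoc intro!: nn_integral_cmult)
  have "\<Union>G \<in> sets borel"
    using finite_G dyadic_G dyadic_sets by auto
  have "sets N = sets borel"
    by (simp add: N_def sets_M)
  then have "emeasure M (\<Union>G) \<le> emeasure N (\<Union>G)"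
    using finite_G dyadic_G sets_M dyadic_sets assms(3)
    by (intro emeasure_Union_dyadic_mono) (auto simp: emeasure_N)
  then have "ennreal (1 / eta) * emeasure M (\<Union>G) \<le> ennreal (1 / eta) * (ennreal c * (\<integral>\<^sup>+x\<in>\<Union>G. h x \<partial>M))"
    using emeasure_N[OF \<open>\<Union>G \<in> sets borel\<close>] by (intro mult_left_mono) auto
  with carleson_packing have "(\<Sum>P\<in>G. emeasure M P) \<le> ennreal (1 / eta) * (ennreal c * (\<integral>\<^sup>+x\<in>\<Union>G. h x \<partial>M))"
    by (rule order_trans)
  also have "\<dots> = ennreal (c / eta) * (\<integral>\<^sup>+x\<in>\<Union>G. h x \<partial>M)"
    using eta assms(2) by (simp add: ennreal_mult_mult)
  finally show ?thesis .
qed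

end

end

definition family_sup :: "real set set \<Rightarrow> (real set \<Rightarrow> ennreal) \<Rightarrow> real \<Rightarrow> ennreal" where
  "family_sup G b x = (SUP P\<in>G. b P * indicator P x)"

lemma family_sup_ge: "P \<in> G \<Longrightarrow> x \<in> P \<Longrightarrow> b P \<le> family_sup G b x"
  unfolding family_sup_def by (rule SUP_upper2[of P]) auto

lemma family_sup_mono: "G \<subseteq> G' \<Longrightarrow> family_sup G b x \<le> family_sup G' b x"
  unfolding family_sup_def by (rule SUP_subset_mono) auto

lemma borel_measurable_family_sup [measurable]:
  "finite G \<Longrightarrow> G \<subseteq> dyadic \<Longrightarrow> family_sup G b \<in> borel_measurable borel"
  unfolding family_sup_def using dyadic_sets
  by (intro borel_measurable_SUP) (auto intro: countable_finite)

lemma family_sup_remove_min: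
  assumes "P0 \<in> G" "\<And>P. P \<in> G \<Longrightarrow> b P0 \<le> b P"
  shows "family_sup (G - {P0}) (\<lambda>P. b P - b P0) x + b P0 * indicator (\<Union>G) x \<le> family_sup G b x"
proof (cases "x \<in> \<Union>G")
  case True
  then obtain P1 where "P1 \<in> G" "x \<in> P1"
    by auto
  then have low: "b P0 \<le> family_sup G b x"
    using assms(2) family_sup_ge order_trans by blast
  have summand: "(b P - b P0) * indicator P x + b P0 \<le> family_sup G b x" if "P \<in> G" for P
    using that low family_sup_ge[of P G x b] assms(2)[OF that]
    by (cases "x \<in> P") (auto simp: diff_add_cancel_ennreal)
  have "family_sup (G - {P0}) (\<lambda>P. b P - b P0) x + b P0 \<le> family_sup G b x"
  proof (cases "G - {P0} = {}")
    case True
    have "family_sup (G - {P0}) (\<lambda>P. b P - b P0) x = 0"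
      unfolding family_sup_def True by (simp add: bot_ennreal)
    with low show ?thesis
      by simp
  next
    case False
    then show ?thesis
      using summand unfolding family_sup_def
      by (subst ennreal_SUP_add_left[symmetric]) (auto intro!: SUP_least)
  qed
  with True show ?thesis
    by simp
next
  case False
  then have "family_sup (G - {P0}) (\<lambda>P. b P - b P0) x \<le> 0"
    unfolding family_sup_def by (intro SUP_least) auto
  with False show ?thesis
    by simp
qed

context dyadic_measure
begin

text \<open>Subtracting the smallest coefficient \<open>b P0\<close> splits off one instance of the packing
  estimate \<open>carleson_packing_integral\<close>; the remaining coefficients live on fewer intervals.\<close>

lemma carleson_embedding:
  assumes "sparse_by M eta G E" "finite G" "0 < eta" "eta \<le> 1"
    and h: "h \<in> borel_measurable borel" and "0 \<le> c"
    and "\<And>P. P \<in> G \<Longrightarrow> emeasure M P \<le> ennreal c * (\<integral>\<^sup>+x\<in>P. h x \<partial>M)"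
  shows "(\<Sum>P\<in>G. emeasure M P * b P) \<le> ennreal (c / eta) * (\<integral>\<^sup>+x. h x * family_sup G b x \<partial>M)"
  using assms(2,1,7)
proof (induction G arbitrary: b rule: finite_psubset_induct)
  case (psubset G)
  define K where "K = ennreal (c / eta)"
  show ?case
  proof (cases "G = {}")
    case False
    obtain P0 where P0: "P0 \<in> G" "\<And>P. P \<in> G \<Longrightarrow> b P0 \<le> b P"
      using Min_in[of "b ` G"] Min_le[of "b ` G"] psubset.hyps False by fastforce
    define b' where "b' P = b P - b P0" for P
    have "G \<subseteq> dyadic"
      using psubset.prems(1) by (simp add: sparse_by_def)
    then have [measurable]: "h \<in> borel_measurable borel" "family_sup (G - {P0}) b' \<in> borel_measurable borel"
        "\<Union>G \<in> sets borel"
      using h psubset.hyps dyadic_sets by (auto intro: borel_measurable_family_sup)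
    have IH: "(\<Sum>P\<in>G - {P0}. emeasure M P * b' P) \<le> K * (\<integral>\<^sup>+x. h x * family_sup (G - {P0}) b' x \<partial>M)"
      unfolding K_def using P0(1) psubset.prems by (intro psubset.IH) (auto intro: sparse_by_subset)
    have layer: "(\<Sum>P\<in>G. emeasure M P) \<le> K * (\<integral>\<^sup>+x. h x * indicator (\<Union>G) x \<partial>M)"
      unfolding K_def using carleson_packing_integral[OF psubset.prems(1) psubset.hyps(1)] assms(3-6) psubset.prems(2)
      by simp
    have "(\<Sum>P\<in>G. emeasure M P * b P) = (\<Sum>P\<in>G - {P0}. emeasure M P * b' P) + b P0 * (\<Sum>P\<in>G. emeasure M P)"
      unfolding b'_def by (rule sum_mult_remove_min[of G P0 b, OF psubset.hyps(1) P0])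
    also have "\<dots> \<le> K * (\<integral>\<^sup>+x. h x * family_sup (G - {P0}) b' x \<partial>M) + b P0 * (K * (\<integral>\<^sup>+x. h x * indicator (\<Union>G) x \<partial>M))"
      using IH layer by (intro add_mono mult_left_mono) auto
    also have "\<dots> = K * (\<integral>\<^sup>+x. h x * (family_sup (G - {P0}) b' x + b P0 * indicator (\<Union>G) x) \<partial>M)"
      by (simp add: nn_integral_add nn_integral_cmult distrib_left mult.left_commute)
    also have "\<dots> \<le> K * (\<integral>\<^sup>+x. h x * family_sup G b x \<partial>M)"
      using family_sup_remove_min[of P0 G b, OF P0] unfolding b'_def
      by (intro mult_left_mono nn_integral_mono) auto
    finally show ?thesis
      unfolding K_def .
  qed simp
qed

end

lemma dyadic_measure_mu:
  assumes "lam > 0"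
  shows "dyadic_measure (mu lam)"
proof
  show "emeasure (mu lam) Q < \<infinity>" if "Q \<in> dyadic" for Q
    by (rule emeasure_mu_dyadic(2)[OF assms that])
qed simp

section \<open>Young functions and the inverse of the complementary function\<close>

lemma young_nonneg: "young \<phi> \<Longrightarrow> 0 \<le> t \<Longrightarrow> 0 \<le> \<phi> t"
  and young_zero: "young \<phi> \<Longrightarrow> \<phi> 0 = 0"
  and young_convex: "young \<phi> \<Longrightarrow> convex_on {0..} \<phi>"
  and young_at_top: "young \<phi> \<Longrightarrow> filterlim \<phi> at_top at_top"
  by (simp_all add: young_def)

lemma borel_measurable_young:
  assumes "young \<phi>" "v \<in> borel_measurable borel" "\<gamma> > 0"
  shows "(\<lambda>x. \<phi> (\<bar>v x\<bar> / \<gamma>)) \<in> borel_measurable borel"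
proof -
  have "mono (\<lambda>t. \<phi> (max t 0))"
    using assms(1) unfolding young_def mono_on_def by (auto intro!: monoI)
  then have "(\<lambda>t. \<phi> (max t 0)) \<in> borel_measurable borel"
    by (rule borel_measurable_mono)
  moreover have "(\<lambda>x. \<bar>v x\<bar> / \<gamma>) \<in> borel_measurable borel"
    using assms(2) by measurable
  ultimately have "(\<lambda>x. \<phi> (max (\<bar>v x\<bar> / \<gamma>) 0)) \<in> borel_measurable borel"
    by (rule measurable_compose[rotated])
  then show ?thesis
    using assms(3) by (simp add: max_absorb1)
qed

lemma conj_inv_eq_Sup: "conj_inv \<phi> s = Sup {r. 0 \<le> r \<and> (\<forall>t>0. r * t - \<phi> t \<le> s)}"
  unfolding conj_inv_def young_conj_def by (simp add: SUP_le_iff Ball_def)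

context
  fixes \<phi> :: "real \<Rightarrow> real"
  assumes young: "young \<phi>"
begin

lemma young_divide_mono:
  assumes "0 < r" "r \<le> t"
  shows "\<phi> r / r \<le> \<phi> t / t"
proof -
  have "\<phi> ((1 - r / t) *\<^sub>R 0 + (r / t) *\<^sub>R t) \<le> (1 - r / t) * \<phi> 0 + (r / t) * \<phi> t"
    using assms by (intro convex_onD[OF young_convex[OF young]]) auto
  then have "\<phi> r \<le> r / t * \<phi> t"
    using assms by (simp add: young_zero[OF young])
  then show ?thesis
    using assms by (simp add: field_simps)
qed

lemma bdd_above_conj_set: "bdd_above {r. 0 \<le> r \<and> (\<forall>t>0. r * t - \<phi> t \<le> s)}"
  by (rule bdd_aboveI[of _ "s + \<phi> 1"]) (auto dest: spec[of _ 1])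

lemma conj_inv_upper: "0 \<le> r \<Longrightarrow> (\<And>t. t > 0 \<Longrightarrow> r * t - \<phi> t \<le> s) \<Longrightarrow> r \<le> conj_inv \<phi> s"
  unfolding conj_inv_eq_Sup by (rule cSup_upper[OF _ bdd_above_conj_set]) auto

lemma zero_in_conj_set: "0 \<le> s \<Longrightarrow> 0 \<in> {r. 0 \<le> r \<and> (\<forall>t>0. r * t - \<phi> t \<le> s)}"
proof -
  assume "0 \<le> s"
  have "- \<phi> t \<le> s" if "t > 0" for t
    using young_nonneg[OF young, of t] that \<open>0 \<le> s\<close> by linarith
  then show ?thesis
    by simp
qed

lemma conj_inv_nonneg: "0 \<le> s \<Longrightarrow> 0 \<le> conj_inv \<phi> s"
  using zero_in_conj_set by (intro conj_inv_upper) auto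

lemma young_inequality:
  assumes "0 \<le> s" "0 \<le> u"
  shows "u * conj_inv \<phi> s \<le> \<phi> u + s"
proof (cases "u = 0")
  case True
  then show ?thesis
    using assms by (simp add: young_zero[OF young])
next
  case False
  then have "u > 0"
    using assms(2) by simp
  have "{r. 0 \<le> r \<and> (\<forall>t>0. r * t - \<phi> t \<le> s)} \<noteq> {}"
    using zero_in_conj_set[OF assms(1)] by blast
  moreover have "r \<le> (\<phi> u + s) / u" if "\<forall>t>0. r * t - \<phi> t \<le> s" for r
    using that[rule_format, OF \<open>u > 0\<close>] \<open>u > 0\<close> by (simp add: field_simps)
  ultimately have "conj_inv \<phi> s \<le> (\<phi> u + s) / u"
    unfolding conj_inv_eq_Sup by (intro cSup_least) auto
  then show ?thesis
    using \<open>u > 0\<close> by (simp add: field_simps)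
qed

lemma young_inequality_scaled:
  assumes "0 \<le> s" "0 \<le> u" "0 < \<gamma>"
  shows "u * conj_inv \<phi> s \<le> \<gamma> * (\<phi> (u / \<gamma>) + s)"
proof -
  have "u / \<gamma> * conj_inv \<phi> s \<le> \<phi> (u / \<gamma>) + s"
    using assms by (intro young_inequality) auto
  then show ?thesis
    using assms(3) by (simp add: field_simps)
qed

lemma conj_inv_mono:
  assumes "0 \<le> s" "s \<le> s'"
  shows "conj_inv \<phi> s \<le> conj_inv \<phi> s'"
proof (rule conj_inv_upper)
  show "0 \<le> conj_inv \<phi> s"
    by (rule conj_inv_nonneg[OF assms(1)])
  fix t :: real assume "t > 0"
  then have "t * conj_inv \<phi> s \<le> \<phi> t + s"
    using assms(1) by (intro young_inequality) auto
  then show "conj_inv \<phi> s * t - \<phi> t \<le> s'"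
    using assms(2) by (simp add: mult.commute)
qed

lemma conj_inv_mult_le:
  assumes "1 \<le> a" "0 \<le> s"
  shows "conj_inv \<phi> (a * s) \<le> a * conj_inv \<phi> s"
proof -
  have "conj_inv \<phi> (a * s) / a \<le> conj_inv \<phi> s"
  proof (rule conj_inv_upper)
    show "0 \<le> conj_inv \<phi> (a * s) / a"
      using assms conj_inv_nonneg[of "a * s"] by simp
    fix t :: real assume "t > 0"
    have "t * conj_inv \<phi> (a * s) \<le> \<phi> t + a * s"
      using young_inequality[of "a * s" t] assms \<open>t > 0\<close> by simp
    also have "\<dots> \<le> a * \<phi> t + a * s"
      using assms young_nonneg[OF young, of t] \<open>t > 0\<close> by (simp add: mult_le_cancel_right1)
    finally show "conj_inv \<phi> (a * s) / a * t - \<phi> t \<le> s"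
      using assms by (simp add: field_simps)
  qed
  then show ?thesis
    using assms by (simp add: field_simps)
qed

lemma conj_inv_pos:
  assumes "s > 0"
  shows "conj_inv \<phi> s > 0"
proof -
  obtain T where T: "\<And>t. t \<ge> T \<Longrightarrow> \<phi> t \<ge> 1"
    using young_at_top[OF young] unfolding filterlim_at_top eventually_at_top_linorder by blast
  define t0 where "t0 = max T 1"
  have t0: "t0 > 0" "\<phi> t0 \<ge> 1"
    using T by (auto simp: t0_def)
  have "min 1 s / t0 \<le> conj_inv \<phi> s"
  proof (rule conj_inv_upper)
    fix t :: real assume "t > 0"
    show "min 1 s / t0 * t - \<phi> t \<le> s"
    proof (cases "t \<ge> t0")
      case True
      have "1 / t0 \<le> \<phi> t0 / t0"
        using t0 by (intro divide_right_mono) auto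
      then have "1 / t0 \<le> \<phi> t / t"
        using young_divide_mono[OF t0(1) True] by linarith
      have "min 1 s / t0 * t \<le> 1 / t0 * t"
        using t0 \<open>t > 0\<close> by (intro mult_right_mono divide_right_mono) auto
      also have "\<dots> \<le> \<phi> t / t * t"
        using \<open>1 / t0 \<le> \<phi> t / t\<close> \<open>t > 0\<close> by (intro mult_right_mono) auto
      finally have "min 1 s / t0 * t \<le> \<phi> t"
        using \<open>t > 0\<close> by simp
      then show ?thesis
        using assms by linarith
    next
      case False
      then have "min 1 s / t0 * t \<le> s / t0 * t0"
        using t0 \<open>t > 0\<close> assms by (intro mult_mono) (auto simp: divide_right_mono)
      then show ?thesis
        using t0 young_nonneg[OF young, of t] \<open>t > 0\<close> by simp
    qed
  qed (use t0 assms in simp)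
  moreover have "0 < min 1 s / t0"
    using t0 assms by simp
  ultimately show ?thesis
    by linarith
qed
end

section \<open>Luxemburg averages\<close>

context
  fixes lam :: real and Q :: "real set"
  assumes pos: "0 < emeasure (mu lam) Q" and finite: "emeasure (mu lam) Q < \<infinity>"
begin

lemma lux_le:
  assumes "\<gamma> > 0" "(\<integral>\<^sup>+x\<in>Q. ennreal (\<psi> (\<bar>g x\<bar> / \<gamma>)) \<partial>mu lam) \<le> emeasure (mu lam) Q"
  shows "lux lam \<psi> g Q \<le> ennreal \<gamma>"
  unfolding lux_def using assms average_le_1_iff[OF pos finite] by (intro Inf_lower) auto

lemma emeasure_less_of_less_lux:
  assumes "\<gamma> > 0" "ennreal \<gamma> < lux lam \<psi> g Q"
  shows "emeasure (mu lam) Q < (\<integral>\<^sup>+x\<in>Q. ennreal (\<psi> (\<bar>g x\<bar> / \<gamma>)) \<partial>mu lam)"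
  using lux_le[OF assms(1)] assms(2) by (meson leD leI)

lemma le_mult_lux:
  assumes "0 < K" "K < \<infinity>"
    and "\<And>\<gamma>. \<gamma> > 0 \<Longrightarrow> (\<integral>\<^sup>+x\<in>Q. ennreal (\<psi> (\<bar>g x\<bar> / \<gamma>)) \<partial>mu lam) \<le> emeasure (mu lam) Q
      \<Longrightarrow> X \<le> K * ennreal \<gamma>"
  shows "X \<le> K * lux lam \<psi> g Q"
proof -
  have "X / K \<le> lux lam \<psi> g Q"
    unfolding lux_def using assms average_le_1_iff[OF pos finite]
    by (intro Inf_greatest divide_le_posI_ennreal) auto
  then have "X / K * K \<le> K * lux lam \<psi> g Q"
    by (simp add: mult.commute mult_left_mono)
  moreover have "X / K * K = X"
    using assms by (simp add: ennreal_divide_times ennreal_divide_self)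
  ultimately show ?thesis
    by simp
qed

end

text \<open>Holder's inequality for \<open>\<phi>\<close> and its complementary function, on a subset \<open>D\<close> of \<open>P\<close>:
  the smaller \<open>D\<close> is relative to \<open>P\<close>, the larger the gain \<open>\<phi>\<^sup>*\<^sup>-\<^sup>1(s)\<close>.\<close>

lemma orlicz_holder:
  assumes young: "young \<phi>"
    and P: "P \<in> sets borel" "0 < emeasure (mu lam) P" "emeasure (mu lam) P < \<infinity>"
    and D: "D \<in> sets borel" "D \<subseteq> P" and "0 \<le> s" and small: "ennreal s * emeasure (mu lam) D \<le> emeasure (mu lam) P"
    and v: "v \<in> borel_measurable borel" "\<And>x. x \<in> D \<Longrightarrow> 0 \<le> v x"
  shows "(\<integral>\<^sup>+x\<in>D. ennreal (v x) \<partial>mu lam) * ennreal (conj_inv \<phi> s) \<le> 2 * emeasure (mu lam) P * lux lam \<phi> v P"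
proof (rule le_mult_lux[OF P(2,3)])
  fix \<gamma> :: real
  assume "\<gamma> > 0" and admissible: "(\<integral>\<^sup>+x\<in>P. ennreal (\<phi> (\<bar>v x\<bar> / \<gamma>)) \<partial>mu lam) \<le> emeasure (mu lam) P"
  note [measurable] = v(1) D(1) P(1) borel_measurable_young[OF young v(1) \<open>\<gamma> > 0\<close>]
  have "ennreal (v x) * indicator D x * ennreal (conj_inv \<phi> s)
      \<le> ennreal \<gamma> * (ennreal (\<phi> (\<bar>v x\<bar> / \<gamma>)) * indicator P x + ennreal s * indicator D x)" for x
  proof (cases "x \<in> D")
    case True
    then have "x \<in> P" "0 \<le> v x"
      using D(2) v(2) by auto
    moreover have "v x * conj_inv \<phi> s \<le> \<gamma> * (\<phi> (v x / \<gamma>) + s)"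
      using young_inequality_scaled[OF young \<open>0 \<le> s\<close> v(2)[OF True] \<open>\<gamma> > 0\<close>] .
    ultimately show ?thesis
      using True \<open>\<gamma> > 0\<close> \<open>0 \<le> s\<close> young_nonneg[OF young] conj_inv_nonneg[OF young \<open>0 \<le> s\<close>]
      by (simp add: ennreal_mult[symmetric] ennreal_plus[symmetric] ennreal_leI del: ennreal_plus)
  qed simp
  then have "(\<integral>\<^sup>+x\<in>D. ennreal (v x) \<partial>mu lam) * ennreal (conj_inv \<phi> s)
      \<le> (\<integral>\<^sup>+x. ennreal \<gamma> * (ennreal (\<phi> (\<bar>v x\<bar> / \<gamma>)) * indicator P x + ennreal s * indicator D x) \<partial>mu lam)"
    by (subst nn_integral_multc[symmetric]) (auto intro: nn_integral_mono)
  also have "\<dots> = ennreal \<gamma> * ((\<integral>\<^sup>+x\<in>P. ennreal (\<phi> (\<bar>v x\<bar> / \<gamma>)) \<partial>mu lam) + ennreal s * emeasure (mu lam) D)"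
    by (simp add: nn_integral_cmult nn_integral_add nn_integral_cmult_indicator)
  also have "\<dots> \<le> ennreal \<gamma> * (emeasure (mu lam) P + emeasure (mu lam) P)"
    using admissible small by (intro mult_left_mono add_mono) auto
  finally show "(\<integral>\<^sup>+x\<in>D. ennreal (v x) \<partial>mu lam) * ennreal (conj_inv \<phi> s) \<le> 2 * emeasure (mu lam) P * ennreal \<gamma>"
    by (simp add: mult_2 algebra_simps)
qed (use P in \<open>auto simp: ennreal_mult_less_top ennreal_zero_less_mult_iff\<close>)

lemma lux_Ioc_eq_Ioo: "lux lam \<psi> g {a<..b} = lux lam \<psi> g {a<..<b}"
proof -
  have "AE x in mu lam. x \<notin> {b}"
    by (rule AE_mu_not_in_finite) simp
  then have ae: "AE x in mu lam. x \<in> {a<..b} \<longleftrightarrow> x \<in> {a<..<b}"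
    by eventually_elim auto
  have "emeasure (mu lam) {a<..b} = emeasure (mu lam) {a<..<b}"
    using ae by (intro emeasure_eq_AE) auto
  moreover have "(\<integral>\<^sup>+x\<in>{a<..b}. h x \<partial>mu lam) = (\<integral>\<^sup>+x\<in>{a<..<b}. h x \<partial>mu lam)" for h :: "real \<Rightarrow> ennreal"
    using ae by (intro nn_integral_cong_AE) (auto elim!: eventually_mono simp: indicator_def)
  ultimately show ?thesis
    unfolding lux_def by simp
qed

lemma AE_family_sup_le_M_young:
  assumes "finite G" "G \<subseteq> dyadic"
  shows "AE x in mu lam. family_sup G (lux lam \<phi> g) x \<le> M_young lam \<phi> g x"
proof -
  have "AE x in mu lam. x \<notin> Sup ` G"
    using assms(1) by (intro AE_mu_not_in_finite) simp
  then show ?thesis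
  proof (rule eventually_mono)
  fix x assume x: "x \<notin> Sup ` G"
  show "family_sup G (lux lam \<phi> g) x \<le> M_young lam \<phi> g x"
    unfolding family_sup_def
  proof (rule SUP_least)
    fix P assume "P \<in> G"
    then obtain a b where ab: "0 \<le> a" "a < b" "P = {a<..b}"
      using assms(2) by (blast elim: dyadicE)
    show "lux lam \<phi> g P * indicator P x \<le> M_young lam \<phi> g x"
    proof (cases "x \<in> P")
      case True
      then have "x \<in> {a<..<b}"
        using x ab \<open>P \<in> G\<close> by (auto simp: image_iff)
      then have "lux lam \<phi> g {a<..<b} \<le> M_young lam \<phi> g x"
        unfolding M_young_def using ab by (intro SUP_upper) blast
      then show ?thesis
        using True ab by (simp add: lux_Ioc_eq_Ioo)
    qed simp
  qed
  qed
qed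

lemma Phi_nonneg: "0 \<le> x \<Longrightarrow> 0 \<le> Phi x"
  unfolding Phi_def by (intro mult_nonneg_nonneg) (auto intro!: ln_ge_zero simp: add_increasing2)

lemma borel_measurable_Phi [measurable]: "Phi \<in> borel_measurable borel"
  unfolding Phi_def by measurable

lemma Phi_pow2_le:
  assumes "0 \<le> s"
  shows "Phi (2 ^ n * s) \<le> 2 ^ n * (1 + real n) * Phi s"
proof -
  have pos: "0 < exp 1 + s"
    using assms by (intro add_pos_nonneg) auto
  have "1 \<le> ln (exp 1 + s)"
    using assms pos by (subst ln_ge_iff) auto
  then have ln2: "ln 2 \<le> ln (exp 1 + s)"
    using ln_2_less_1 by linarith
  have "exp 1 + 2 ^ n * s \<le> 2 ^ n * (exp 1 + s)"
    using assms by (simp add: algebra_simps)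
  then have "ln (exp 1 + 2 ^ n * s) \<le> ln (2 ^ n * (exp 1 + s))"
    using assms pos by (subst ln_le_cancel_iff) (auto intro: add_pos_nonneg)
  also have "\<dots> = real n * ln 2 + ln (exp 1 + s)"
    using pos by (simp add: ln_mult ln_realpow)
  also have "\<dots> \<le> (1 + real n) * ln (exp 1 + s)"
    using ln2 by (simp add: algebra_simps mult_left_mono)
  finally have "s * ln (exp 1 + 2 ^ n * s) \<le> s * ((1 + real n) * ln (exp 1 + s))"
    using assms by (rule mult_left_mono)
  then have "2 ^ n * (s * ln (exp 1 + 2 ^ n * s)) \<le> 2 ^ n * (s * ((1 + real n) * ln (exp 1 + s)))"
    by (rule mult_left_mono) simp
  then show ?thesis
    by (simp add: Phi_def mult_ac)
qed

lemma emeasure_le_of_less_lux_Phi: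
  assumes "lam > 0" "Q \<in> dyadic" "t > 0" "f \<in> borel_measurable borel"
    and "ennreal (t / 2 ^ n) < lux lam Phi f Q"
  shows "emeasure (mu lam) Q \<le> ennreal (2 ^ n * (1 + real n)) * (\<integral>\<^sup>+x\<in>Q. ennreal (Phi (\<bar>f x\<bar> / t)) \<partial>mu lam)"
proof -
  have [measurable]: "Q \<in> sets borel"
    using assms(2) by (rule dyadic_sets)
  have "emeasure (mu lam) Q < (\<integral>\<^sup>+x\<in>Q. ennreal (Phi (\<bar>f x\<bar> / (t / 2 ^ n))) \<partial>mu lam)"
    using assms emeasure_mu_dyadic by (intro emeasure_less_of_less_lux) auto
  also have "\<dots> \<le> (\<integral>\<^sup>+x\<in>Q. ennreal (2 ^ n * (1 + real n)) * ennreal (Phi (\<bar>f x\<bar> / t)) \<partial>mu lam)"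
  proof (intro nn_integral_mono mult_right_mono)
    fix x
    have "Phi (\<bar>f x\<bar> / (t / 2 ^ n)) \<le> 2 ^ n * (1 + real n) * Phi (\<bar>f x\<bar> / t)"
      using Phi_pow2_le[of "\<bar>f x\<bar> / t" n] \<open>t > 0\<close> by (simp add: field_simps)
    then show "ennreal (Phi (\<bar>f x\<bar> / (t / 2 ^ n))) \<le> ennreal (2 ^ n * (1 + real n)) * ennreal (Phi (\<bar>f x\<bar> / t))"
      using Phi_nonneg[of "\<bar>f x\<bar> / t"] \<open>t > 0\<close> by (simp add: ennreal_mult[symmetric] ennreal_leI)
  qed simp
  also have "\<dots> = ennreal (2 ^ n * (1 + real n)) * (\<integral>\<^sup>+x\<in>Q. ennreal (Phi (\<bar>f x\<bar> / t)) \<partial>mu lam)"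
    using assms(4) by (subst nn_integral_cmult[symmetric]) (auto simp: mult.assoc)
  finally show ?thesis
    by simp
qed

section \<open>Layers of cubes and the tolerated overlap\<close>

definition layer :: "(real set \<Rightarrow> ennreal) \<Rightarrow> real \<Rightarrow> real set set \<Rightarrow> nat \<Rightarrow> real set set" where
  "layer a t G k = {Q\<in>G. ennreal (t / 2 ^ Suc k) < a Q \<and> a Q \<le> ennreal (t / 2 ^ k)}"

lemma layer_subset: "layer a t G k \<subseteq> G"
  by (auto simp: layer_def)

lemma ex_layer_index:
  assumes "t > 0" "0 < \<alpha>" "\<alpha> \<le> ennreal t"
  shows "\<exists>k. ennreal (t / 2 ^ Suc k) < \<alpha> \<and> \<alpha> \<le> ennreal (t / 2 ^ k)"
proof -
  obtain a where a: "\<alpha> = ennreal a" "0 < a" "a \<le> t"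
    using assms by (cases \<alpha>) (auto simp: ennreal_le_iff top_unique)
  have ex: "\<exists>k. t / 2 ^ Suc k < a"
  proof -
    obtain n where "(1 / 2) ^ n < a / t"
      using real_arch_pow_inv[of "a / t" "1 / 2"] a assms(1) by auto
    then have "t / 2 ^ Suc n < a"
      using assms(1) by (simp add: field_simps power_one_over)
    then show ?thesis ..
  qed
  define k where "k = (LEAST k. t / 2 ^ Suc k < a)"
  have "t / 2 ^ Suc k < a"
    unfolding k_def by (rule LeastI_ex[OF ex])
  moreover have "a \<le> t / 2 ^ k"
  proof (cases k)
    case (Suc k')
    then have "\<not> t / 2 ^ Suc k' < a"
      unfolding k_def using not_less_Least by (metis lessI)
    then show ?thesis
      using Suc by simp
  qed (use a in simp)
  ultimately show ?thesis
    using a assms(1) by (intro exI[of _ k]) (simp add: ennreal_less_iff)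
qed

lemma ex_layer_bound:
  assumes "finite G"
  shows "\<exists>N. \<forall>Q\<in>G. 0 < a Q \<longrightarrow> ennreal (t / 2 ^ N) < a Q"
proof -
  have "(\<lambda>N. ennreal (t / 2 ^ N)) \<longlonglongrightarrow> ennreal 0"
    by (intro tendsto_ennrealI LIMSEQ_divide_realpow_zero) simp
  then have "\<forall>Q\<in>G. eventually (\<lambda>N. 0 < a Q \<longrightarrow> ennreal (t / 2 ^ N) < a Q) sequentially"
    by (auto dest: order_tendstoD(2))
  then have "eventually (\<lambda>N. \<forall>Q\<in>G. 0 < a Q \<longrightarrow> ennreal (t / 2 ^ N) < a Q) sequentially"
    by (rule eventually_ball_finite[OF assms])
  then show ?thesis
    by (auto simp: eventually_sequentially)
qed

text \<open>At most \<open>allowance k\<close> cubes of layer \<open>k\<close> are tolerated above a point: the tolerated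
  cubes contribute at most \<open>3/32\<close> of the level \<open>t\<close>, while beyond the allowance sparseness
  yields the gain \<open>\<phi>\<^sup>*\<^sup>-\<^sup>1(31\<^bsup>allowance k\<^esup>) \<ge> \<phi>\<^sup>*\<^sup>-\<^sup>1(32\<^bsup>2\<^bsup>k div 2\<^esup>\<^esup>)\<close>, which pays for the loss
  \<open>2\<^sup>k k\<close> of the \<open>L log L\<close> rescaling.\<close>

definition allowance :: "nat \<Rightarrow> nat" where
  "allowance k = (if k < 12 then 0 else 2 ^ (k div 2 + 1))"

lemma sum_pairs: "(\<Sum>k<2 * M. g k) = (\<Sum>m<M. g (2 * m) + g (2 * m + 1))" for g :: "nat \<Rightarrow> real"
  by (induction M) (simp_all add: add.assoc)

lemma allowance_pair:
  "real (allowance (2 * m)) / 2 ^ (2 * m) + real (allowance (2 * m + 1)) / 2 ^ (2 * m + 1)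
    = (if m < 6 then 0 else 3 / 2 ^ m)"
proof (cases "m < 6")
  case False
  have "(2::real) ^ (2 * m) = 2 ^ m * 2 ^ m"
    by (simp add: mult_2 power_add)
  then have "(2::real) ^ (m + 1) / 2 ^ (2 * m) = 2 / 2 ^ m" "(2::real) ^ (m + 1) / 2 ^ (2 * m + 1) = 1 / 2 ^ m"
    by simp_all
  then show ?thesis
    using False by (simp add: allowance_def)
qed (simp add: allowance_def)

lemma sum_allowance_le: "(\<Sum>k<N. real (allowance k) / 2 ^ k) \<le> 3 / 32"
proof -
  have geometric: "(\<Sum>m<M. if m < 6 then 0 else 3 / 2 ^ m :: real) = (if M \<le> 6 then 0 else 3 / 32 - 6 / 2 ^ M)" for M
  proof (induction M)
    case (Suc M)
    show ?case
    proof (cases "M < 6")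
      case True
      then have "M \<in> {0, 1, 2, 3, 4, 5}"
        by auto
      then show ?thesis
        using Suc by auto
    next
      case False
      then show ?thesis
        using Suc by (auto simp: field_simps)
    qed
  qed simp
  have "(\<Sum>k<N. real (allowance k) / 2 ^ k) \<le> (\<Sum>k<2 * N. real (allowance k) / 2 ^ k)"
    by (intro sum_mono2) auto
  also have "\<dots> = (\<Sum>m<N. if m < 6 then 0 else 3 / 2 ^ m)"
    unfolding sum_pairs allowance_pair ..
  also have "\<dots> \<le> 3 / 32"
    unfolding geometric by auto
  finally show ?thesis .
qed

lemma mult_indicator_le_layers:
  assumes "t > 0" "Q \<in> G"
    and below: "x \<in> Q \<Longrightarrow> a Q \<le> ennreal t"
    and N: "0 < a Q \<Longrightarrow> ennreal (t / 2 ^ N) < a Q"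
  shows "a Q * indicator Q x \<le> (\<Sum>k<N. ennreal (t / 2 ^ k) * (indicator (layer a t G k) Q * indicator Q x))"
proof (cases "x \<in> Q \<and> 0 < a Q")
  case True
  then obtain k where k: "ennreal (t / 2 ^ Suc k) < a Q" "a Q \<le> ennreal (t / 2 ^ k)"
    using ex_layer_index[OF \<open>t > 0\<close>] below by blast
  then have "ennreal (t / 2 ^ N) < ennreal (t / 2 ^ k)"
    using N True by (meson less_le_trans)
  then have "(2::real) ^ k < 2 ^ N"
    using \<open>t > 0\<close> by (simp add: ennreal_less_iff field_simps)
  then have "k < N"
    by simp
  have "a Q * indicator Q x \<le> ennreal (t / 2 ^ k) * (indicator (layer a t G k) Q * indicator Q x)"
    using k True \<open>Q \<in> G\<close> by (simp add: layer_def)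
  also have "\<dots> \<le> (\<Sum>k<N. ennreal (t / 2 ^ k) * (indicator (layer a t G k) Q * indicator Q x))"
    using \<open>k < N\<close> by (intro member_le_sum) auto
  finally show ?thesis .
qed auto

lemma sum_le_sum_depth_layers:
  assumes "finite G" "t > 0"
    and below: "\<And>Q. Q \<in> G \<Longrightarrow> x \<in> Q \<Longrightarrow> a Q \<le> ennreal t"
    and N: "\<And>Q. Q \<in> G \<Longrightarrow> 0 < a Q \<Longrightarrow> ennreal (t / 2 ^ N) < a Q"
  shows "(\<Sum>Q\<in>G. a Q * indicator Q x) \<le> (\<Sum>k<N. ennreal (t / 2 ^ k) * of_nat (depth (layer a t G k) x))"
proof -
  have depth_layer: "(\<Sum>Q\<in>G. indicator (layer a t G k) Q * indicator Q x) = (of_nat (depth (layer a t G k) x) :: ennreal)" for k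
  proof -
    have "(\<Sum>Q\<in>G. indicator (layer a t G k) Q * indicator Q x) = (\<Sum>Q\<in>{Q\<in>G. Q \<in> layer a t G k}. indicator Q x :: ennreal)"
      using assms(1) by (rule sum_indicator_mult)
    also have "{Q\<in>G. Q \<in> layer a t G k} = layer a t G k"
      using layer_subset by blast
    finally show ?thesis
      using finite_subset[OF layer_subset assms(1)]
      by (simp add: depth_def of_nat_card_eq_sum_indicator[of _ x "\<lambda>Q. Q"])
  qed
  have "(\<Sum>Q\<in>G. a Q * indicator Q x)
      \<le> (\<Sum>Q\<in>G. \<Sum>k<N. ennreal (t / 2 ^ k) * (indicator (layer a t G k) Q * indicator Q x))"
    using assms by (intro sum_mono mult_indicator_le_layers) auto
  also have "\<dots> = (\<Sum>k<N. ennreal (t / 2 ^ k) * (\<Sum>Q\<in>G. indicator (layer a t G k) Q * indicator Q x))"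
    by (subst sum.swap) (simp add: sum_distrib_left)
  also have "\<dots> = (\<Sum>k<N. ennreal (t / 2 ^ k) * of_nat (depth (layer a t G k) x))"
    by (simp only: depth_layer)
  finally show ?thesis .
qed

lemma sum_le_layers:
  assumes "finite G" "t > 0"
    and "\<And>Q. Q \<in> G \<Longrightarrow> x \<in> Q \<Longrightarrow> a Q \<le> ennreal t"
    and "\<And>Q. Q \<in> G \<Longrightarrow> 0 < a Q \<Longrightarrow> ennreal (t / 2 ^ N) < a Q"
  shows "(\<Sum>Q\<in>G. a Q * indicator Q x)
    \<le> ennreal (3 / 32 * t) + ennreal t * (\<Sum>k<N. ennreal (1 / 2 ^ k) * of_nat (depth (layer a t G k) x - allowance k))"
proof -
  have split: "ennreal (t / 2 ^ k) * (of_nat A + of_nat B)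
      = ennreal (t * (real A / 2 ^ k)) + ennreal t * (ennreal (1 / 2 ^ k) * of_nat B)" for k A B
  proof -
    have "ennreal (t / 2 ^ k) * of_nat A = ennreal (t * (real A / 2 ^ k))"
      using \<open>t > 0\<close> by (simp add: ennreal_of_nat_eq_real_of_nat ennreal_mult[symmetric])
    moreover have "ennreal (t / 2 ^ k) = ennreal t * ennreal (1 / 2 ^ k)"
      using \<open>t > 0\<close> by (simp add: ennreal_mult[symmetric])
    ultimately show ?thesis
      by (simp add: distrib_left mult.assoc)
  qed
  have "(\<Sum>k<N. ennreal (t * (real (allowance k) / 2 ^ k))) = ennreal (t * (\<Sum>k<N. real (allowance k) / 2 ^ k))"
    using \<open>t > 0\<close> by (simp add: sum_ennreal sum_distrib_left)
  also have "\<dots> \<le> ennreal (3 / 32 * t)"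
    using sum_allowance_le[of N] \<open>t > 0\<close> by (intro ennreal_leI) simp
  finally have allowed: "(\<Sum>k<N. ennreal (t * (real (allowance k) / 2 ^ k))) \<le> ennreal (3 / 32 * t)" .
  have "(\<Sum>Q\<in>G. a Q * indicator Q x) \<le> (\<Sum>k<N. ennreal (t / 2 ^ k) * of_nat (depth (layer a t G k) x))"
    by (rule sum_le_sum_depth_layers[OF assms])
  also have "\<dots> \<le> (\<Sum>k<N. ennreal (t / 2 ^ k) * (of_nat (allowance k) + of_nat (depth (layer a t G k) x - allowance k)))"
    by (intro sum_mono mult_left_mono) (simp_all flip: of_nat_add)
  also have "\<dots> = (\<Sum>k<N. ennreal (t * (real (allowance k) / 2 ^ k)))
      + ennreal t * (\<Sum>k<N. ennreal (1 / 2 ^ k) * of_nat (depth (layer a t G k) x - allowance k))"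
    by (simp only: split sum.distrib sum_distrib_left)
  also have "\<dots> \<le> ennreal (3 / 32 * t)
      + ennreal t * (\<Sum>k<N. ennreal (1 / 2 ^ k) * of_nat (depth (layer a t G k) x - allowance k))"
    using allowed by (rule add_right_mono)
  finally show ?thesis .
qed

lemma one_le_mult_of_less_add:
  assumes "t > 0" "ennreal t < ennreal (3 / 32 * t) + ennreal t * R"
  shows "1 \<le> ennreal (4 / 3) * R"
proof (cases R)
  case (real r)
  from assms(2) have "ennreal t < ennreal (3 / 32 * t) + ennreal t * ennreal r"
    by (simp only: real)
  also have "\<dots> = ennreal (3 / 32 * t + t * r)"
    using \<open>t > 0\<close> \<open>0 \<le> r\<close> by (simp add: ennreal_mult)
  finally have "t < 3 / 32 * t + t * r"
    using \<open>t > 0\<close> \<open>0 \<le> r\<close> by (subst (asm) ennreal_less_iff) auto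
  then have "1 \<le> 4 / 3 * r"
    using \<open>t > 0\<close> by (simp add: field_simps)
  then have "ennreal 1 \<le> ennreal (4 / 3 * r)"
    by (rule ennreal_leI)
  also have "\<dots> = ennreal (4 / 3) * R"
    unfolding real by (rule ennreal_mult) (use \<open>0 \<le> r\<close> in simp_all)
  finally show ?thesis
    by simp
qed (simp add: ennreal_mult_top)

lemma indicator_level_set_le:
  assumes "finite G" "t > 0" "\<And>Q. Q \<in> G \<Longrightarrow> 0 < a Q \<Longrightarrow> ennreal (t / 2 ^ N) < a Q"
  shows "indicator {x. ennreal t < (\<Sum>Q\<in>G. a Q * indicator Q x)} x
    \<le> indicator (\<Union>{Q\<in>G. ennreal t < a Q}) x
      + ennreal (4 / 3) * (\<Sum>k<N. ennreal (1 / 2 ^ k) * of_nat (depth (layer a t G k) x - allowance k))"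
    (is "_ \<le> _ + ennreal (4 / 3) * ?R")
proof (cases "x \<in> \<Union>{Q\<in>G. ennreal t < a Q} \<or> (\<Sum>Q\<in>G. a Q * indicator Q x) \<le> ennreal t")
  case False
  then have "ennreal t < (\<Sum>Q\<in>G. a Q * indicator Q x)"
    by (simp add: not_le)
  also have "(\<Sum>Q\<in>G. a Q * indicator Q x) \<le> ennreal (3 / 32 * t) + ennreal t * ?R"
    using False assms by (intro sum_le_layers) (auto simp: not_less)
  finally have "1 \<le> ennreal (4 / 3) * ?R"
    using \<open>t > 0\<close> by (rule one_le_mult_of_less_add[rotated])
  with False show ?thesis
    by (auto simp: indicator_def not_le)
qed (auto simp: indicator_def add_increasing2 not_less)

lemma K_term_nonneg: "young \<phi> \<Longrightarrow> 0 \<le> K_term \<phi> k"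
  unfolding K_term_def using conj_inv_nonneg[of \<phi> "32 ^ 2 ^ k"] by simp

context
  fixes \<phi> :: "real \<Rightarrow> real"
  assumes young: "young \<phi>" and summable: "summable (\<lambda>k. K_term \<phi> (Suc k))"
begin

lemma K_phi_nonneg: "0 \<le> K_phi \<phi>"
  unfolding K_phi_def using summable K_term_nonneg[OF young] by (intro suminf_nonneg) auto

lemma sum_K_term_le: "(\<Sum>m<M. K_term \<phi> m) \<le> K_phi \<phi>"
proof (cases M)
  case (Suc M')
  have "(\<Sum>m<M. K_term \<phi> m) = K_term \<phi> 0 + (\<Sum>m<M'. K_term \<phi> (Suc m))"
    unfolding Suc by (rule sum.lessThan_Suc_shift)
  also have "\<dots> \<le> (\<Sum>m. K_term \<phi> (Suc m))"
    using sum_le_suminf[OF summable, of "{..<M'}"] K_term_nonneg[OF young] by (simp add: K_term_def[of _ 0])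
  finally show ?thesis
    by (simp add: K_phi_def)
qed (simp add: K_phi_nonneg)

lemma K_term_le_K_phi: "K_term \<phi> k \<le> K_phi \<phi>"
  using sum_K_term_le[of "Suc k"] K_term_nonneg[OF young] sum_nonneg[of "{..<k}" "K_term \<phi>"]
  by simp

lemma inverse_conj_inv_one_le: "1 / conj_inv \<phi> 1 \<le> 1024 * K_term \<phi> 1"
proof -
  have "conj_inv \<phi> (1024 * 1) \<le> 1024 * conj_inv \<phi> 1"
    by (rule conj_inv_mult_le[OF young]) auto
  then have "1 / conj_inv \<phi> 1 \<le> 1024 / conj_inv \<phi> 1024"
    using conj_inv_pos[OF young, of 1] conj_inv_pos[OF young, of 1024] by (simp add: field_simps)
  then show ?thesis
    by (simp add: K_term_def)
qed

lemma allowance_term_le: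
  "real (k + 2) / conj_inv \<phi> (31 ^ allowance k)
    \<le> 14336 * K_term \<phi> 1 * (if k < 12 then 1 else 0) + 3 * K_term \<phi> (k div 2)"
proof (cases "k < 12")
  case True
  then have "real (k + 2) / conj_inv \<phi> (31 ^ allowance k) \<le> 14 * (1 / conj_inv \<phi> 1)"
    using conj_inv_pos[OF young, of 1] by (simp add: allowance_def divide_right_mono)
  also have "\<dots> \<le> 14 * (1024 * K_term \<phi> 1)"
    using inverse_conj_inv_one_le by simp
  finally show ?thesis
    using True K_term_nonneg[OF young, of "k div 2"] by simp
next
  case False
  define m where "m = k div 2"
  have "(32::real) ^ 2 ^ m \<le> (31 ^ 2) ^ 2 ^ m"
    by (intro power_mono) auto
  also have "\<dots> = 31 ^ allowance k"
    using False by (simp add: allowance_def m_def power_mult)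
  finally have "conj_inv \<phi> (32 ^ 2 ^ m) \<le> conj_inv \<phi> (31 ^ allowance k)"
    by (intro conj_inv_mono[OF young]) auto
  moreover have "conj_inv \<phi> (32 ^ 2 ^ m) > 0" "real (k + 2) \<le> 3 * real m"
    using conj_inv_pos[OF young] False by (auto simp: m_def)
  ultimately have "real (k + 2) / conj_inv \<phi> (31 ^ allowance k) \<le> 3 * real m / conj_inv \<phi> (32 ^ 2 ^ m)"
    by (intro frac_le) auto
  then show ?thesis
    using False by (simp add: K_term_def m_def)
qed

lemma sum_allowance_terms_le: "(\<Sum>k<N. real (k + 2) / conj_inv \<phi> (31 ^ allowance k)) \<le> 200000 * K_phi \<phi>"
proof -
  have "(\<Sum>k<N. real (k + 2) / conj_inv \<phi> (31 ^ allowance k))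
      \<le> (\<Sum>k<N. 14336 * K_term \<phi> 1 * (if k < 12 then 1 else 0) + 3 * K_term \<phi> (k div 2))"
    by (intro sum_mono allowance_term_le)
  also have "\<dots> = 14336 * K_term \<phi> 1 * (\<Sum>k<N. if k < 12 then 1 else 0) + 3 * (\<Sum>k<N. K_term \<phi> (k div 2))"
    by (simp add: sum.distrib sum_distrib_left)
  also have "(\<Sum>k<N. if k < 12 then 1 else 0) = real (min N 12)"
    by (induction N) auto
  also have "(\<Sum>k<N. K_term \<phi> (k div 2)) \<le> (\<Sum>k<2 * N. K_term \<phi> (k div 2))"
    using K_term_nonneg[OF young] by (intro sum_mono2) auto
  also have "\<dots> = 2 * (\<Sum>m<N. K_term \<phi> m)"
    by (simp add: sum_pairs sum_distrib_left)
  finally have "(\<Sum>k<N. real (k + 2) / conj_inv \<phi> (31 ^ allowance k))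
      \<le> 14336 * K_term \<phi> 1 * real (min N 12) + 3 * (2 * K_phi \<phi>)"
    using sum_K_term_le[of N] by simp
  moreover have "K_term \<phi> 1 * real (min N 12) \<le> K_phi \<phi> * 12"
    using K_term_le_K_phi[of 1] K_term_nonneg[OF young, of 1] by (intro mult_mono) auto
  ultimately show ?thesis
    using K_phi_nonneg by linarith
qed

end

section \<open>The estimate for finite sparse families\<close>

context
  fixes lam :: real and F :: "real set set" and E :: "real set \<Rightarrow> real set"
    and \<phi> v f :: "real \<Rightarrow> real" and t :: real
  assumes lam: "lam > 0" and sparse: "sparse_by (mu lam) (31 / 32) F E" and finite_F: "finite F"
    and young: "young \<phi>" and v: "v \<in> borel_measurable borel" "\<And>x. x > 0 \<Longrightarrow> 0 \<le> v x"
    and f: "f \<in> borel_measurable borel" and t: "t > 0"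
begin

interpretation mu: dyadic_measure "mu lam"
  by (rule dyadic_measure_mu[OF lam])

lemma dyadic_F: "F \<subseteq> dyadic"
  using sparse by (simp add: sparse_by_def)

lemma integral_depth_excess_le_sum:
  assumes "G \<subseteq> F"
  shows "(\<integral>\<^sup>+x. ennreal (v x) * of_nat (depth G x - L) \<partial>mu lam) * ennreal (conj_inv \<phi> (31 ^ L))
    \<le> 2 * (\<Sum>P\<in>G. emeasure (mu lam) P * lux lam \<phi> v P)"
proof -
  have G: "finite G" "G \<subseteq> dyadic" "sparse_by (mu lam) (31 / 32) G E"
    using assms finite_F dyadic_F sparse by (auto intro: finite_subset sparse_by_subset)
  define D where "D P = {x\<in>P. L < depth {Q\<in>G. Q \<subseteq> P} x}" for P
  have D: "D P \<in> sets borel" "D P \<subseteq> P" if "P \<in> G" for P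
    using mu.sets_deep_points[OF G(3,1)] that by (auto simp: D_def)
  have "of_nat (depth G x - L) \<le> (of_nat (card {P\<in>G. x \<in> D P}) :: ennreal)" for x
    using depth_diff_le_card_deep[OF G(1,2)] by (simp add: D_def conj_commute)
  then have "(\<integral>\<^sup>+x. ennreal (v x) * of_nat (depth G x - L) \<partial>mu lam) \<le> (\<integral>\<^sup>+x. (\<Sum>P\<in>G. ennreal (v x) * indicator (D P) x) \<partial>mu lam)"
    using G(1) by (intro nn_integral_mono) (simp add: of_nat_card_eq_sum_indicator sum_distrib_left[symmetric] mult_left_mono)
  also have "\<dots> = (\<Sum>P\<in>G. \<integral>\<^sup>+x\<in>D P. ennreal (v x) \<partial>mu lam)"
    using D v(1) by (intro nn_integral_sum) auto
  finally have "(\<integral>\<^sup>+x. ennreal (v x) * of_nat (depth G x - L) \<partial>mu lam) * ennreal (conj_inv \<phi> (31 ^ L))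
      \<le> (\<Sum>P\<in>G. \<integral>\<^sup>+x\<in>D P. ennreal (v x) \<partial>mu lam) * ennreal (conj_inv \<phi> (31 ^ L))"
    by (rule mult_right_mono) simp
  also have "\<dots> = (\<Sum>P\<in>G. (\<integral>\<^sup>+x\<in>D P. ennreal (v x) \<partial>mu lam) * ennreal (conj_inv \<phi> (31 ^ L)))"
    by (rule sum_distrib_right)
  also have "\<dots> \<le> (\<Sum>P\<in>G. 2 * emeasure (mu lam) P * lux lam \<phi> v P)"
  proof (rule sum_mono)
    fix P assume "P \<in> G"
    have "emeasure (mu lam) (D P) \<le> ennreal ((1 / 31) ^ L) * emeasure (mu lam) P"
      using mu.emeasure_deep_points[OF G(3,1) _ _ \<open>P \<in> G\<close>, of L] by (simp add: D_def)
    then have "ennreal (31 ^ L) * emeasure (mu lam) (D P) \<le> emeasure (mu lam) P"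
      by (auto dest: mult_left_mono[of _ _ "ennreal (31 ^ L)"] simp: ennreal_mult_mult power_one_over)
    moreover have "P \<in> sets borel" "0 < emeasure (mu lam) P" "emeasure (mu lam) P < \<infinity>"
      using G(2) \<open>P \<in> G\<close> dyadic_sets emeasure_mu_dyadic[OF lam] by auto
    moreover have "0 \<le> v x" if "x \<in> D P" for x
      using that D(2)[OF \<open>P \<in> G\<close>] G(2) \<open>P \<in> G\<close> dyadic_pos v(2) by blast
    ultimately show "(\<integral>\<^sup>+x\<in>D P. ennreal (v x) \<partial>mu lam) * ennreal (conj_inv \<phi> (31 ^ L))
        \<le> 2 * emeasure (mu lam) P * lux lam \<phi> v P"
      using D[OF \<open>P \<in> G\<close>] v(1) by (intro orlicz_holder[OF young]) auto
  qed
  finally show ?thesis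
    by (simp add: sum_distrib_left mult.assoc)
qed

lemma integral_depth_excess_le:
  assumes "G \<subseteq> F" "\<And>Q. Q \<in> G \<Longrightarrow> ennreal (t / 2 ^ n) < lux lam Phi f Q"
  shows "(\<integral>\<^sup>+x. ennreal (v x) * of_nat (depth G x - L) \<partial>mu lam)
    \<le> ennreal (64 / 31 * (2 ^ n * (1 + real n)) / conj_inv \<phi> (31 ^ L))
      * (\<integral>\<^sup>+x. ennreal (Phi (\<bar>f x\<bar> / t)) * family_sup F (lux lam \<phi> v) x \<partial>mu lam)"
proof (rule ennreal_le_divide_mult)
  define c where "c = 2 ^ n * (1 + real n)"
  have G: "finite G" "G \<subseteq> dyadic" "sparse_by (mu lam) (31 / 32) G E"
    using assms finite_F dyadic_F sparse by (auto intro: finite_subset sparse_by_subset)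
  have "(\<integral>\<^sup>+x. ennreal (v x) * of_nat (depth G x - L) \<partial>mu lam) * ennreal (conj_inv \<phi> (31 ^ L))
      \<le> 2 * (\<Sum>P\<in>G. emeasure (mu lam) P * lux lam \<phi> v P)"
    by (rule integral_depth_excess_le_sum[OF assms(1)])
  also have "\<dots> \<le> 2 * (ennreal (c / (31 / 32)) * (\<integral>\<^sup>+x. ennreal (Phi (\<bar>f x\<bar> / t)) * family_sup G (lux lam \<phi> v) x \<partial>mu lam))"
    using G(2) f t assms(2)
    by (intro mult_left_mono mu.carleson_embedding[OF G(3,1)]) (auto simp: c_def intro!: emeasure_le_of_less_lux_Phi[OF lam])
  also have "\<dots> \<le> 2 * (ennreal (c / (31 / 32)) * (\<integral>\<^sup>+x. ennreal (Phi (\<bar>f x\<bar> / t)) * family_sup F (lux lam \<phi> v) x \<partial>mu lam))"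
    using family_sup_mono[OF assms(1)] by (intro mult_left_mono nn_integral_mono) auto
  also have "\<dots> = ennreal (64 / 31 * c) * (\<integral>\<^sup>+x. ennreal (Phi (\<bar>f x\<bar> / t)) * family_sup F (lux lam \<phi> v) x \<partial>mu lam)"
    by (simp add: c_def ennreal_mult_mult flip: ennreal_numeral)
  finally show "(\<integral>\<^sup>+x. ennreal (v x) * of_nat (depth G x - L) \<partial>mu lam) * ennreal (conj_inv \<phi> (31 ^ L))
      \<le> ennreal (64 / 31 * (2 ^ n * (1 + real n)))
        * (\<integral>\<^sup>+x. ennreal (Phi (\<bar>f x\<bar> / t)) * family_sup F (lux lam \<phi> v) x \<partial>mu lam)"
    unfolding c_def .
qed (use conj_inv_pos[OF young] in auto)

lemma measurable_depth_layer [measurable]: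
  "depth (layer (lux lam Phi f) t F k) \<in> borel \<rightarrow>\<^sub>M count_space UNIV"
  using layer_subset[of "lux lam Phi f" t F k] finite_F dyadic_F dyadic_sets
  by (intro measurable_depth) (auto intro: finite_subset)

context
  assumes summable: "summable (\<lambda>k. K_term \<phi> (Suc k))"
begin

lemma integral_large_averages:
  "(\<integral>\<^sup>+x. ennreal (v x) * indicator (\<Union>{Q\<in>F. ennreal t < lux lam Phi f Q}) x \<partial>mu lam)
    \<le> ennreal (2200 * K_phi \<phi>) * (\<integral>\<^sup>+x. ennreal (Phi (\<bar>f x\<bar> / t)) * family_sup F (lux lam \<phi> v) x \<partial>mu lam)"
proof -
  define G where "G = {Q\<in>F. ennreal t < lux lam Phi f Q}"
  have "(\<integral>\<^sup>+x. ennreal (v x) * indicator (\<Union>G) x \<partial>mu lam) \<le> (\<integral>\<^sup>+x. ennreal (v x) * of_nat (depth G x - 0) \<partial>mu lam)"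
    using finite_F indicator_Union_le_depth[of G] by (intro nn_integral_mono mult_left_mono) (auto simp: G_def)
  also have "\<dots> \<le> ennreal (64 / 31 * (2 ^ 0 * (1 + real 0)) / conj_inv \<phi> (31 ^ 0))
      * (\<integral>\<^sup>+x. ennreal (Phi (\<bar>f x\<bar> / t)) * family_sup F (lux lam \<phi> v) x \<partial>mu lam)"
    by (rule integral_depth_excess_le) (auto simp: G_def)
  also have "\<dots> \<le> ennreal (2200 * K_phi \<phi>) * (\<integral>\<^sup>+x. ennreal (Phi (\<bar>f x\<bar> / t)) * family_sup F (lux lam \<phi> v) x \<partial>mu lam)"
  proof (intro mult_right_mono ennreal_leI)
    have "64 / 31 / conj_inv \<phi> 1 \<le> 64 / 31 * (1024 * K_term \<phi> 1)"
      using mult_left_mono[OF inverse_conj_inv_one_le[OF young summable], of "64 / 31"] by simp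
    then show "64 / 31 * (2 ^ 0 * (1 + real 0)) / conj_inv \<phi> (31 ^ 0) \<le> 2200 * K_phi \<phi>"
      using K_term_le_K_phi[OF young summable, of 1] K_term_nonneg[OF young, of 1] by simp
  qed simp
  finally show ?thesis
    unfolding G_def .
qed

lemma integral_excess_depth:
  "(\<integral>\<^sup>+x. ennreal (v x) * (\<Sum>k<N. ennreal (1 / 2 ^ k) * of_nat (depth (layer (lux lam Phi f) t F k) x - allowance k)) \<partial>mu lam)
    \<le> ennreal (826000 * K_phi \<phi>) * (\<integral>\<^sup>+x. ennreal (Phi (\<bar>f x\<bar> / t)) * family_sup F (lux lam \<phi> v) x \<partial>mu lam)"
    (is "?I \<le> _ * ?X")
proof -
  define L where "L k = layer (lux lam Phi f) t F k" for k
  note [measurable] = v(1)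
  have "?I = (\<integral>\<^sup>+x. (\<Sum>k<N. ennreal (1 / 2 ^ k) * (ennreal (v x) * of_nat (depth (L k) x - allowance k))) \<partial>mu lam)"
    unfolding L_def by (simp add: sum_distrib_left ac_simps)
  also have "\<dots> = (\<Sum>k<N. \<integral>\<^sup>+x. ennreal (1 / 2 ^ k) * (ennreal (v x) * of_nat (depth (L k) x - allowance k)) \<partial>mu lam)"
    unfolding L_def by (rule nn_integral_sum) measurable
  also have "\<dots> = (\<Sum>k<N. ennreal (1 / 2 ^ k) * (\<integral>\<^sup>+x. ennreal (v x) * of_nat (depth (L k) x - allowance k) \<partial>mu lam))"
    unfolding L_def by (intro sum.cong refl nn_integral_cmult) measurable
  also have "\<dots> \<le> (\<Sum>k<N. ennreal (1 / 2 ^ k)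
      * (ennreal (64 / 31 * (2 ^ Suc k * (1 + real (Suc k))) / conj_inv \<phi> (31 ^ allowance k)) * ?X))"
    by (intro sum_mono mult_left_mono integral_depth_excess_le) (auto simp: L_def layer_def)
  also have "\<dots> = (\<Sum>k<N. ennreal (128 / 31 * (real (k + 2) / conj_inv \<phi> (31 ^ allowance k))) * ?X)"
  proof (rule sum.cong)
    fix k
    have "1 / 2 ^ k * (64 / 31 * (2 ^ Suc k * (1 + real (Suc k)))) = 128 / 31 * real (k + 2)"
      by (simp add: field_simps)
    then have "1 / 2 ^ k * (64 / 31 * (2 ^ Suc k * (1 + real (Suc k))) / conj_inv \<phi> (31 ^ allowance k))
        = 128 / 31 * (real (k + 2) / conj_inv \<phi> (31 ^ allowance k))"
      by (simp only: times_divide_eq_right)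
    then show "ennreal (1 / 2 ^ k) * (ennreal (64 / 31 * (2 ^ Suc k * (1 + real (Suc k))) / conj_inv \<phi> (31 ^ allowance k)) * ?X)
        = ennreal (128 / 31 * (real (k + 2) / conj_inv \<phi> (31 ^ allowance k))) * ?X"
      using conj_inv_nonneg[OF young, of "31 ^ allowance k"] by (simp add: ennreal_mult_mult)
  qed simp
  also have "\<dots> = (\<Sum>k<N. ennreal (128 / 31 * (real (k + 2) / conj_inv \<phi> (31 ^ allowance k)))) * ?X"
    by (rule sum_distrib_right[symmetric])
  also have "\<dots> = ennreal (128 / 31 * (\<Sum>k<N. real (k + 2) / conj_inv \<phi> (31 ^ allowance k))) * ?X"
    using conj_inv_nonneg[OF young] by (simp add: sum_ennreal sum_distrib_left)
  also have "\<dots> \<le> ennreal (826000 * K_phi \<phi>) * ?X"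
    using sum_allowance_terms_le[OF young summable, of N] K_phi_nonneg[OF young summable]
    by (intro mult_right_mono ennreal_leI) auto
  finally show ?thesis .
qed

lemma weak_type_finite:
  "(\<integral>\<^sup>+x. ennreal (v x) * indicator {x. ennreal t < (\<Sum>Q\<in>F. lux lam Phi f Q * indicator Q x)} x \<partial>mu lam)
    \<le> ennreal (2000000 * K_phi \<phi>) * (\<integral>\<^sup>+x. ennreal (Phi (\<bar>f x\<bar> / t)) * family_sup F (lux lam \<phi> v) x \<partial>mu lam)"
    (is "_ \<le> _ * ?X")
proof -
  obtain N where N: "\<forall>Q\<in>F. 0 < lux lam Phi f Q \<longrightarrow> ennreal (t / 2 ^ N) < lux lam Phi f Q"
    using ex_layer_bound[OF finite_F] by blast
  define Om where "Om = \<Union>{Q\<in>F. ennreal t < lux lam Phi f Q}"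
  define R where "R x = (\<Sum>k<N. ennreal (1 / 2 ^ k) * of_nat (depth (layer (lux lam Phi f) t F k) x - allowance k))" for x
  have "Om \<in> sets borel"
    unfolding Om_def using finite_F dyadic_F dyadic_sets by (intro sets.finite_Union) auto
  note [measurable] = this v(1)
  have pointwise: "indicator {x. ennreal t < (\<Sum>Q\<in>F. lux lam Phi f Q * indicator Q x)} x \<le> indicator Om x + ennreal (4 / 3) * R x"
    for x
    unfolding Om_def R_def using N by (intro indicator_level_set_le[OF finite_F t]) auto
  then have "ennreal (v x) * indicator {x. ennreal t < (\<Sum>Q\<in>F. lux lam Phi f Q * indicator Q x)} x
      \<le> ennreal (v x) * indicator Om x + ennreal (4 / 3) * (ennreal (v x) * R x)" for x
    using mult_left_mono[OF pointwise, of "ennreal (v x)" x] by (simp add: distrib_left mult.left_commute)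
  then have "(\<integral>\<^sup>+x. ennreal (v x) * indicator {x. ennreal t < (\<Sum>Q\<in>F. lux lam Phi f Q * indicator Q x)} x \<partial>mu lam)
      \<le> (\<integral>\<^sup>+x. ennreal (v x) * indicator Om x + ennreal (4 / 3) * (ennreal (v x) * R x) \<partial>mu lam)"
    by (rule nn_integral_mono)
  also have "\<dots> = (\<integral>\<^sup>+x. ennreal (v x) * indicator Om x \<partial>mu lam) + ennreal (4 / 3) * (\<integral>\<^sup>+x. ennreal (v x) * R x \<partial>mu lam)"
    unfolding R_def by (simp add: nn_integral_add nn_integral_cmult)
  also have "\<dots> \<le> ennreal (2200 * K_phi \<phi>) * ?X + ennreal (4 / 3) * (ennreal (826000 * K_phi \<phi>) * ?X)"
    unfolding Om_def R_def by (intro add_mono mult_left_mono integral_large_averages integral_excess_depth) simp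
  also have "\<dots> = ennreal (2200 * K_phi \<phi> + 4 / 3 * (826000 * K_phi \<phi>)) * ?X"
    using K_phi_nonneg[OF young summable]
    by (simp add: ennreal_mult_mult ennreal_plus[symmetric] distrib_right[symmetric] del: ennreal_plus)
  also have "\<dots> \<le> ennreal (2000000 * K_phi \<phi>) * ?X"
    using K_phi_nonneg[OF young summable] by (intro mult_right_mono ennreal_leI) auto
  finally show ?thesis .
qed


lemma weak_type_finite_M_young:
  "(\<integral>\<^sup>+x. ennreal (v x) * indicator {x. 0 < x \<and> ennreal t < (\<Sum>Q\<in>F. lux lam Phi f Q * indicator Q x)} x \<partial>mu lam)
    \<le> ennreal (2000000 * K_phi \<phi>) * (\<integral>\<^sup>+x. ennreal (Phi (\<bar>f x\<bar> / t)) * M_young lam \<phi> v x \<partial>mu lam)"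
proof -
  have "AE x in mu lam. family_sup F (lux lam \<phi> v) x \<le> M_young lam \<phi> v x"
    using finite_F dyadic_F by (rule AE_family_sup_le_M_young)
  then have "AE x in mu lam. ennreal (Phi (\<bar>f x\<bar> / t)) * family_sup F (lux lam \<phi> v) x
      \<le> ennreal (Phi (\<bar>f x\<bar> / t)) * M_young lam \<phi> v x"
    by eventually_elim (simp add: mult_left_mono)
  then have "(\<integral>\<^sup>+x. ennreal (Phi (\<bar>f x\<bar> / t)) * family_sup F (lux lam \<phi> v) x \<partial>mu lam)
      \<le> (\<integral>\<^sup>+x. ennreal (Phi (\<bar>f x\<bar> / t)) * M_young lam \<phi> v x \<partial>mu lam)"
    by (rule nn_integral_mono_AE)
  with weak_type_finite have "(\<integral>\<^sup>+x. ennreal (v x) * indicator {x. ennreal t < (\<Sum>Q\<in>F. lux lam Phi f Q * indicator Q x)} x \<partial>mu lam)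
      \<le> ennreal (2000000 * K_phi \<phi>) * (\<integral>\<^sup>+x. ennreal (Phi (\<bar>f x\<bar> / t)) * M_young lam \<phi> v x \<partial>mu lam)"
    by (rule order_trans[OF _ mult_left_mono]) simp
  then show ?thesis
    by (rule order_trans[rotated]) (auto intro!: nn_integral_mono mult_left_mono simp: indicator_def)
qed
end

end

definition dyadic_upto :: "nat \<Rightarrow> real set set" where
  "dyadic_upto n = (\<lambda>(k::nat, j::int). {real k * 2 powr j <.. (real k + 1) * 2 powr j}) ` ({..n} \<times> {-int n..int n})"

lemma finite_dyadic_upto: "finite (dyadic_upto n)"
  unfolding dyadic_upto_def by simp

lemma dyadic_upto_mono: "m \<le> n \<Longrightarrow> dyadic_upto m \<subseteq> dyadic_upto n"
  unfolding dyadic_upto_def by (intro image_mono) auto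

lemma finite_subset_dyadic_upto:
  assumes "finite G" "G \<subseteq> dyadic"
  shows "\<exists>n. G \<subseteq> dyadic_upto n"
proof -
  have "\<exists>n. Q \<in> dyadic_upto n" if Q: "Q \<in> dyadic" for Q
  proof -
    obtain k :: nat and j :: int where "Q = {real k * 2 powr j <.. (real k + 1) * 2 powr j}"
      using Q unfolding dyadic_def by blast
    then have "Q \<in> dyadic_upto (max k (nat \<bar>j\<bar>))"
      unfolding dyadic_upto_def by (intro rev_image_eqI[of "(k, j)"]) auto
    then show ?thesis ..
  qed
  then have "\<forall>Q\<in>G. \<exists>n. Q \<in> dyadic_upto n"
    using assms(2) by blast
  from bchoice[OF this] obtain n where n: "\<forall>Q\<in>G. Q \<in> dyadic_upto (n Q)"
    by blast
  have "G \<subseteq> dyadic_upto (Max (n ` G))"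
  proof
    fix Q assume "Q \<in> G"
    then have "dyadic_upto (n Q) \<subseteq> dyadic_upto (Max (n ` G))"
      using assms(1) by (intro dyadic_upto_mono Max_ge) auto
    then show "Q \<in> dyadic_upto (Max (n ` G))"
      using n \<open>Q \<in> G\<close> by blast
  qed
  then show ?thesis ..
qed

lemma A_LlogL_level_set_eq_Union:
  assumes "S \<subseteq> dyadic"
  shows "{x. 0 < x \<and> ennreal t < A_LlogL lam S f x}
    = (\<Union>n. {x. 0 < x \<and> ennreal t < (\<Sum>Q\<in>S \<inter> dyadic_upto n. lux lam Phi f Q * indicator Q x)})"
proof -
  have "ennreal t < A_LlogL lam S f x \<longleftrightarrow> (\<exists>n. ennreal t < (\<Sum>Q\<in>S \<inter> dyadic_upto n. lux lam Phi f Q * indicator Q x))" for x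
  proof
    assume "ennreal t < A_LlogL lam S f x"
    then obtain G where G: "finite G" "G \<subseteq> S" "ennreal t < (\<Sum>Q\<in>G. lux lam Phi f Q * indicator Q x)"
      unfolding A_LlogL_def by (auto simp: less_SUP_iff)
    then obtain n where "G \<subseteq> dyadic_upto n"
      using finite_subset_dyadic_upto assms by blast
    then have "(\<Sum>Q\<in>G. lux lam Phi f Q * indicator Q x) \<le> (\<Sum>Q\<in>S \<inter> dyadic_upto n. lux lam Phi f Q * indicator Q x)"
      using G finite_dyadic_upto by (intro sum_mono2) auto
    with G(3) show "\<exists>n. ennreal t < (\<Sum>Q\<in>S \<inter> dyadic_upto n. lux lam Phi f Q * indicator Q x)"
      by (auto intro: less_le_trans)
  next
    assume "\<exists>n. ennreal t < (\<Sum>Q\<in>S \<inter> dyadic_upto n. lux lam Phi f Q * indicator Q x)"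
    then obtain n where "ennreal t < (\<Sum>Q\<in>S \<inter> dyadic_upto n. lux lam Phi f Q * indicator Q x)"
      by blast
    also have "\<dots> \<le> A_LlogL lam S f x"
      unfolding A_LlogL_def using finite_dyadic_upto by (intro SUP_upper) auto
    finally show "ennreal t < A_LlogL lam S f x" .
  qed
  then show ?thesis
    by auto
qed

lemma A_LlogL_weak_type:
  assumes lam: "lam > 0" and sparse: "sparse_by (mu lam) (31 / 32) S E" and young: "young \<phi>"
    and summable: "summable (\<lambda>k. K_term \<phi> (Suc k))"
    and w: "w \<in> borel_measurable borel" "\<And>x. x > 0 \<Longrightarrow> 0 \<le> w x"
    and f: "f \<in> borel_measurable borel" and t: "t > 0"
  shows "wmeas w {x. 0 < x \<and> A_LlogL lam S f x > ennreal t}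
    \<le> ennreal (2000000 * K_phi \<phi>) *
      (\<integral>\<^sup>+x. ennreal (Phi (\<bar>f x\<bar> / t)) * M_young lam \<phi> (\<lambda>y. w y * y powr (-2 * lam)) x \<partial>mu lam)"
proof -
  define v where "v = (\<lambda>y. w y * y powr (-2 * lam))"
  define F where "F n = S \<inter> dyadic_upto n" for n
  define En where "En n = {x. 0 < x \<and> ennreal t < (\<Sum>Q\<in>F n. lux lam Phi f Q * indicator Q x)}" for n
  have S: "S \<subseteq> dyadic"
    using sparse by (simp add: sparse_by_def)
  have F: "finite (F n)" "sparse_by (mu lam) (31 / 32) (F n) E" for n
    using sparse finite_dyadic_upto by (auto simp: F_def intro: sparse_by_subset)
  have [measurable]: "(\<lambda>x. \<Sum>Q\<in>F n. lux lam Phi f Q * indicator Q x) \<in> borel_measurable borel" for n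
    using S dyadic_sets by (intro borel_measurable_sum borel_measurable_times_ennreal) (auto simp: F_def)
  have [measurable]: "v \<in> borel_measurable borel" "En n \<in> sets borel" for n
    using w(1) unfolding v_def En_def by measurable
  have "(\<Sum>Q\<in>F m. lux lam Phi f Q * indicator Q x) \<le> (\<Sum>Q\<in>F n. lux lam Phi f Q * indicator Q x)"
    if "m \<le> n" for m n x
    using dyadic_upto_mono[OF that] F(1) by (intro sum_mono2) (auto simp: F_def)
  then have "incseq En"
    unfolding incseq_def En_def by (auto intro: less_le_trans)
  have level_set: "{x. 0 < x \<and> A_LlogL lam S f x > ennreal t} = (\<Union>n. En n)"
    using A_LlogL_level_set_eq_Union[OF S] by (simp add: En_def F_def)
  have "(\<Union>n. En n) \<in> sets borel"
    by measurable
  then have "wmeas w {x. 0 < x \<and> A_LlogL lam S f x > ennreal t} = (\<integral>\<^sup>+x. ennreal (v x) * indicator (\<Union>n. En n) x \<partial>mu lam)"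
    unfolding level_set v_def using w by (intro wmeas_eq_nn_integral_mu) (auto simp: En_def)
  also have "\<dots> = (SUP n. \<integral>\<^sup>+x. ennreal (v x) * indicator (En n) x \<partial>mu lam)"
    using \<open>incseq En\<close> by (intro nn_integral_indicator_Union_incseq) auto
  also have "\<dots> \<le> ennreal (2000000 * K_phi \<phi>) * (\<integral>\<^sup>+x. ennreal (Phi (\<bar>f x\<bar> / t)) * M_young lam \<phi> v x \<partial>mu lam)"
    using w f t unfolding En_def v_def
    by (intro SUP_least weak_type_finite_M_young[OF lam F(2) F(1) young _ _ _ _ summable]) auto
  finally show ?thesis
    unfolding v_def .
qed

theorem lemma8p2:
  fixes lam :: real
  assumes "lam > 0"
  shows "\<exists>C>0. \<forall>S \<phi> w f t.
    sparse lam (31/32) S \<and> young \<phi> \<and> summable (\<lambda>k. K_term \<phi> (Suc k)) \<and>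
    (\<forall>x>0. 0 \<le> w x) \<and> loc_int w \<and> f \<in> borel_measurable borel \<and> t > 0 \<longrightarrow>
    wmeas w {x. 0 < x \<and> A_LlogL lam S f x > ennreal t}
      \<le> ennreal (C * K_phi \<phi>) *
        (\<integral>\<^sup>+ x. ennreal (Phi (\<bar>f x\<bar> / t)) * M_young lam \<phi> (\<lambda>y. w y * y powr (-2 * lam)) x \<partial>mu lam)"
proof (intro exI[of _ 2000000] conjI allI impI)
  fix S :: "real set set" and \<phi> w f :: "real \<Rightarrow> real" and t :: real
  assume "sparse lam (31/32) S \<and> young \<phi> \<and> summable (\<lambda>k. K_term \<phi> (Suc k)) \<and>
    (\<forall>x>0. 0 \<le> w x) \<and> loc_int w \<and> f \<in> borel_measurable borel \<and> t > 0"
  moreover from this obtain E where "sparse_by (mu lam) (31 / 32) S E"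
    by (auto simp: sparse_iff_sparse_by)
  ultimately show "wmeas w {x. 0 < x \<and> A_LlogL lam S f x > ennreal t}
      \<le> ennreal (2000000 * K_phi \<phi>) *
        (\<integral>\<^sup>+ x. ennreal (Phi (\<bar>f x\<bar> / t)) * M_young lam \<phi> (\<lambda>y. w y * y powr (-2 * lam)) x \<partial>mu lam)"
    using assms by (intro A_LlogL_weak_type) (auto simp: loc_int_def)
qed simp

end
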